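(* Let $(b_N)$ be positive integers with $b_N\to\infty$ and $b_N=o(N)$, let $\sim$ and $(X^{(N)}_{ij})$ satisfy the hypotheses (O1)–(O3), symmetry, centering, unit variance, uniformly bounded moments and independence across $\sim$-classes (as below), and let $A^{(N)}:=\frac{1}{\sqrt{2b_N}}\big(\chi_{[0,b_N]}(|i-j|)X^{(N)}_{ij}\big)_{1\le i,j\le N}$. For $k\in\mathbb N$ set $Y^{(k)}_N:=\frac1N\operatorname{tr}(A^{(N)})^k$. Then $\lim_{N\to\infty}\mathbb V(Y^{(k)}_N)=0$ for all $k\in\mathbb N$.
   Context: Hypotheses: for each $N$, $\sim$ is an equivalence relation on $\{1,\dots,N\}^2$ with $(p,q)\sim(q,p)$ for all $p,q$, satisfying, as $N\to\infty$: (O1) $\max_p\#\{(q,r,s)\in\{1,\dots,N\}^3:(p,q)\sim(r,s)\}=o(b_N^2)$; (O2) $\max_{p,q,r}\#\{s\in\{1,\dots,N\}:(p,q)\sim(r,s)\}\le B<\infty$ with $B$ independent of $N$; (O3) $\#\{(p,q,r)\in\{1,\dots,N\}^3:(p,q)\sim(q,r),\ r\neq p\}=o(b_N^2)$. The $X^{(N)}_{ij}$ are real random variables with $X^{(N)}_{ij}=X^{(N)}_{ji}$, $\mathbb EX^{(N)}_{ij}=0$, $\mathbb E(X^{(N)}_{ij})^2=1$, $\sup_N\max_{i,j}\mathbb E|X^{(N)}_{ij}|^k<\infty$ for all $k$, and for each $N$ the families $\{X^{(N)}_{pq}:(p,q)\in C\}$, $C$ ranging over the distinct $\sim$-classes,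 are mutually independent. $\chi_{[0,b_N]}(|i-j|)$ equals $1$ if $|i-j|\le b_N$ and $0$ otherwise; $\mathbb V$ denotes variance. *)

theory Defs
  imports "HOL-Probability.Probability" "HOL-Library.Landau_Symbols"
begin

text \<open>Square matrices indexed by \<open>{1..N}\<close>, represented as functions \<open>nat \<Rightarrow> nat \<Rightarrow> real\<close>.\<close>

fun mat_pow :: "nat \<Rightarrow> (nat \<Rightarrow> nat \<Rightarrow> real) \<Rightarrow> nat \<Rightarrow> nat \<Rightarrow> nat \<Rightarrow> real" where
  "mat_pow N A 0 i j = (if i = j then 1 else 0)"
| "mat_pow N A (Suc k) i j = (\<Sum>l\<in>{1..N}. mat_pow N A k i l * A l j)"

definition mat_trace :: "nat \<Rightarrow> (nat \<Rightarrow> nat \<Rightarrow> real) \<Rightarrow> real" where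
  "mat_trace N A = (\<Sum>i\<in>{1..N}. A i i)"

definition band_chi :: "nat \<Rightarrow> nat \<Rightarrow> nat \<Rightarrow> real" where
  "band_chi b i j = (if nat \<bar>int i - int j\<bar> \<le> b then 1 else 0)"

definition band_matrix ::
  "(nat \<Rightarrow> nat) \<Rightarrow> (nat \<Rightarrow> nat \<Rightarrow> nat \<Rightarrow> 'a \<Rightarrow> real) \<Rightarrow> nat \<Rightarrow> 'a \<Rightarrow> nat \<Rightarrow> nat \<Rightarrow> real" where
  "band_matrix b X N \<omega> i j = band_chi (b N) i j * X N i j \<omega> / sqrt (2 * real (b N))"

definition Y_stat ::
  "(nat \<Rightarrow> nat) \<Rightarrow> (nat \<Rightarrow> nat \<Rightarrow> nat \<Rightarrow> 'a \<Rightarrow> real) \<Rightarrow> nat \<Rightarrow> nat \<Rightarrow> 'a \<Rightarrow> real" where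
  "Y_stat b X k N \<omega> = mat_trace N (mat_pow N (band_matrix b X N \<omega>) k) / real N"

end

theory Submission
  imports Defs
begin

text \<open>Expanding the trace, \<open>Y\<^sub>N\<close> is a weighted sum over closed walks of length \<open>k\<close> of the products
  of the entries along the walk, so \<open>\<bbbV>(Y\<^sub>N)\<close> is a double sum of covariances over pairs of closed
  walks. By independence across classes such a covariance vanishes unless every edge of the pair
  shares its class with another edge and some edge of the first walk shares its class with an edge
  of the second; the moment bounds control all remaining covariances by one constant. Counting those
  pairs vertex by vertex, a step along an edge of a new class stays in the band (\<open>2b+1\<close> choices),
  a step along an edge whose class already occurred has at most \<open>2kB\<close> choices by (O2), and at most
  \<open>k-1\<close> steps open a new class. Hence there are \<open>O(N m\<^sub>N b\<^sup>k\<^sup>-\<^sup>1)\<close> such pairs, where \<open>m\<^sub>N\<close> is the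
  maximum in (O1), and \<open>\<bbbV>(Y\<^sub>N) = O(m\<^sub>N / (N b\<^sub>N)) = o(b\<^sub>N/N) \<rightarrow> 0\<close>.\<close>

section \<open>Traces of matrix powers as sums over closed walks\<close>

abbreviation labellings :: "nat \<Rightarrow> nat \<Rightarrow> (nat \<Rightarrow> nat) set" where
  "labellings N n \<equiv> PiE {..<n} (\<lambda>_. {1..N})"

lemma finite_labellings: "finite (labellings N n)"
  by (simp add: finite_PiE)

definition walks :: "nat \<Rightarrow> nat \<Rightarrow> nat \<Rightarrow> nat \<Rightarrow> (nat \<Rightarrow> nat) set" where
  "walks N k i j = {w \<in> PiE {..k} (\<lambda>_. {1..N}). w 0 = i \<and> w k = j}"

lemma finite_walks: "finite (walks N k i j)"
  unfolding walks_def by (rule finite_subset[OF _ finite_PiE[of "{..k}" "\<lambda>_. {1..N}"]]) auto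

lemma bij_betw_walks_Suc:
  assumes "j \<in> {1..N}"
  shows "bij_betw (\<lambda>(l, w). w(Suc k := j)) (SIGMA l:{1..N}. walks N k i l) (walks N (Suc k) i j)"
proof (rule bij_betwI[where g="\<lambda>w. (w k, restrict w {..k})"])
  show "(\<lambda>(l, w). w(Suc k := j)) \<in> (SIGMA l:{1..N}. walks N k i l) \<rightarrow> walks N (Suc k) i j"
    using assms unfolding walks_def by (auto simp: PiE_def extensional_def Pi_def)
  show "(\<lambda>w. (w k, restrict w {..k})) \<in> walks N (Suc k) i j \<rightarrow> (SIGMA l:{1..N}. walks N k i l)"
    unfolding walks_def by (auto simp: PiE_def extensional_def Pi_def)
  show "(\<lambda>w. (w k, restrict w {..k})) ((\<lambda>(l, w). w(Suc k := j)) x) = x"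
    if "x \<in> (SIGMA l:{1..N}. walks N k i l)" for x
    using that unfolding walks_def by (auto simp: PiE_def extensional_def fun_eq_iff split: prod.splits)
  show "(\<lambda>(l, w). w(Suc k := j)) ((\<lambda>w. (w k, restrict w {..k})) y) = y"
    if "y \<in> walks N (Suc k) i j" for y
    using that unfolding walks_def by (auto simp: PiE_def extensional_def fun_eq_iff le_Suc_eq)
qed

lemma mat_pow_eq_sum_walks:
  assumes "i \<in> {1..N}" "j \<in> {1..N}"
  shows "mat_pow N A k i j = (\<Sum>w\<in>walks N k i j. \<Prod>m<k. A (w m) (w (Suc m)))"
  using assms(2)
proof (induction k arbitrary: j)
  case 0
  have "walks N 0 i j = (if i = j then {restrict (\<lambda>_. i) {..0}} else {})"
    using assms(1) unfolding walks_def by (auto simp: PiE_def extensional_def fun_eq_iff)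
  then show ?case by simp
next
  case (Suc k)
  let ?P = "\<lambda>w. \<Prod>m<Suc k. A (w m) (w (Suc m))"
  have step: "(\<Prod>m<k. A (w m) (w (Suc m))) * A l j = ?P (w(Suc k := j))"
    if "w \<in> walks N k i l" for l w
    using that unfolding walks_def by (auto intro!: prod.cong)
  have "mat_pow N A (Suc k) i j = (\<Sum>l\<in>{1..N}. \<Sum>w\<in>walks N k i l. ?P (w(Suc k := j)))"
    using Suc.IH by (simp add: sum_distrib_right step)
  also have "\<dots> = (\<Sum>(l, w)\<in>(SIGMA l:{1..N}. walks N k i l). ?P (w(Suc k := j)))"
    by (rule sum.Sigma) (auto simp: finite_walks)
  also have "\<dots> = (\<Sum>x\<in>(SIGMA l:{1..N}. walks N k i l). ?P ((\<lambda>(l, w). w(Suc k := j)) x))"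
    by (intro sum.cong) auto
  also have "\<dots> = (\<Sum>w\<in>walks N (Suc k) i j. ?P w)"
    by (rule sum.reindex_bij_betw[OF bij_betw_walks_Suc[OF Suc.prems]])
  finally show ?case .
qed

definition closed_walks :: "nat \<Rightarrow> nat \<Rightarrow> (nat \<Rightarrow> nat) set" where
  "closed_walks N k = {w \<in> PiE {..k} (\<lambda>_. {1..N}). w k = w 0}"

lemma finite_closed_walks: "finite (closed_walks N k)"
  unfolding closed_walks_def by (rule finite_subset[OF _ finite_PiE[of "{..k}" "\<lambda>_. {1..N}"]]) auto

lemma sum_closed_walks_eq_sum_cycles:
  assumes k: "k \<ge> 1"
  shows "(\<Sum>w\<in>closed_walks N k. \<Prod>m<k. A (w m) (w (Suc m)))
         = (\<Sum>u\<in>labellings N k. \<Prod>m<k. A (u m) (u (Suc m mod k)))"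
proof (rule sum.reindex_bij_witness[where i="\<lambda>u. restrict (\<lambda>m. if m = k then u 0 else u m) {..k}"
      and j="\<lambda>w. restrict w {..<k}"])
  show "restrict (\<lambda>m. if m = k then restrict w {..<k} 0 else restrict w {..<k} m) {..k} = w"
    if "w \<in> closed_walks N k" for w
    using that k unfolding closed_walks_def by (auto simp: PiE_def extensional_def fun_eq_iff)
  show "restrict (restrict (\<lambda>m. if m = k then u 0 else u m) {..k}) {..<k} = u"
    if "u \<in> labellings N k" for u
    using that by (auto simp: PiE_def extensional_def fun_eq_iff)
  show "restrict (\<lambda>m. if m = k then u 0 else u m) {..k} \<in> closed_walks N k"
    if "u \<in> labellings N k" for u
    using that k unfolding closed_walks_def by (auto simp: PiE_def Pi_def extensional_def)
  show "(\<Prod>m<k. A (restrict w {..<k} m) (restrict w {..<k} (Suc m mod k))) = (\<Prod>m<k. A (w m) (w (Suc m)))"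
    if "w \<in> closed_walks N k" for w
  proof (intro prod.cong refl)
    fix m assume "m \<in> {..<k}"
    then consider "Suc m = k" | "Suc m < k" by fastforce
    then show "A (restrict w {..<k} m) (restrict w {..<k} (Suc m mod k)) = A (w m) (w (Suc m))"
      by cases (use that k \<open>m \<in> {..<k}\<close> in \<open>auto simp: closed_walks_def\<close>)
  qed
qed (auto simp: closed_walks_def)

lemma mat_trace_mat_pow_eq_sum_cycles:
  assumes "k \<ge> 1"
  shows "mat_trace N (mat_pow N A k) = (\<Sum>u\<in>labellings N k. \<Prod>m<k. A (u m) (u (Suc m mod k)))"
proof -
  have "mat_trace N (mat_pow N A k) = (\<Sum>i\<in>{1..N}. \<Sum>w\<in>walks N k i i. \<Prod>m<k. A (w m) (w (Suc m)))"
    unfolding mat_trace_def by (intro sum.cong refl mat_pow_eq_sum_walks) auto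
  also have "\<dots> = (\<Sum>i\<in>{1..N}. \<Sum>w\<in>{w \<in> closed_walks N k. w 0 = i}. \<Prod>m<k. A (w m) (w (Suc m)))"
    by (intro sum.cong refl) (auto simp: walks_def closed_walks_def)
  also have "\<dots> = (\<Sum>w\<in>closed_walks N k. \<Prod>m<k. A (w m) (w (Suc m)))"
    by (rule sum.group[OF finite_closed_walks finite_atLeastAtMost]) (auto simp: closed_walks_def)
  finally show ?thesis using sum_closed_walks_eq_sum_cycles[OF assms] by simp
qed

section \<open>Moments of products of independent entries\<close>

lemma measurable_prod_on_classes:
  fixes ed :: "'i \<Rightarrow> 'e"
  assumes "equiv E R" and "ed ` I \<subseteq> E"
  shows "(\<lambda>z. \<Prod>i\<in>I. z (R``{ed i}) (ed i) :: real)
           \<in> borel_measurable (PiM ((\<lambda>i. R``{ed i}) ` I) (\<lambda>C. PiM C (\<lambda>_. borel)))"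
proof (intro borel_measurable_prod)
  fix i assume i: "i \<in> I"
  have "ed i \<in> R``{ed i}" using i assms by (auto simp: equiv_def refl_on_def)
  then have "(\<lambda>y. y (ed i)) \<in> measurable (PiM (R``{ed i}) (\<lambda>_. borel)) (borel :: real measure)"
    by (rule measurable_component_singleton)
  moreover have "(\<lambda>z. z (R``{ed i})) \<in> measurable (PiM ((\<lambda>i. R``{ed i}) ` I) (\<lambda>C. PiM C (\<lambda>_. borel)))
                   (PiM (R``{ed i}) (\<lambda>_. borel :: real measure))"
    using i by (intro measurable_component_singleton) auto
  ultimately show "(\<lambda>z. z (R``{ed i}) (ed i) :: real)
                     \<in> borel_measurable (PiM ((\<lambda>i. R``{ed i}) ` I) (\<lambda>C. PiM C (\<lambda>_. borel)))"
    using measurable_compose by fastforce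
qed

lemma prod_on_classes_restrict:
  assumes "equiv E R" and "ed ` I \<subseteq> E"
  shows "(\<lambda>\<omega>. \<Prod>i\<in>I. restrict (\<lambda>C. \<lambda>pq\<in>C. Y pq \<omega>) ((\<lambda>i. R``{ed i}) ` I) (R``{ed i}) (ed i))
         = (\<lambda>\<omega>. \<Prod>i\<in>I. Y (ed i) \<omega>)"
proof (intro ext prod.cong refl)
  fix \<omega> i assume i: "i \<in> I"
  have "ed i \<in> R``{ed i}" using i assms by (auto simp: equiv_def refl_on_def)
  then show "restrict (\<lambda>C. \<lambda>pq\<in>C. Y pq \<omega>) ((\<lambda>i. R``{ed i}) ` I) (R``{ed i}) (ed i) = Y (ed i) \<omega>"
    using i by simp
qed

lemma (in prob_space) expectation_prod_indep_classes:
  fixes Y :: "'e \<Rightarrow> 'a \<Rightarrow> real"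
  assumes eq: "equiv E R"
    and ind: "indep_vars (\<lambda>C. PiM C (\<lambda>_. borel)) (\<lambda>C \<omega>. \<lambda>pq\<in>C. Y pq \<omega>) (E // R)"
    and "finite I" "finite J" and edI: "ed ` I \<subseteq> E" and edJ: "ed' ` J \<subseteq> E"
    and disj: "\<And>i j. i \<in> I \<Longrightarrow> j \<in> J \<Longrightarrow> (ed i, ed' j) \<notin> R"
    and "integrable M (\<lambda>\<omega>. \<Prod>i\<in>I. Y (ed i) \<omega>)"
    and "integrable M (\<lambda>\<omega>. \<Prod>j\<in>J. Y (ed' j) \<omega>)"
  shows "expectation (\<lambda>\<omega>. (\<Prod>i\<in>I. Y (ed i) \<omega>) * (\<Prod>j\<in>J. Y (ed' j) \<omega>))
       = expectation (\<lambda>\<omega>. \<Prod>i\<in>I. Y (ed i) \<omega>) * expectation (\<lambda>\<omega>. \<Prod>j\<in>J. Y (ed' j) \<omega>)"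
proof -
  define K1 where "K1 = (\<lambda>i. R``{ed i}) ` I"
  define K2 where "K2 = (\<lambda>j. R``{ed' j}) ` J"
  have "K1 \<subseteq> E // R" "K2 \<subseteq> E // R"
    using edI edJ unfolding K1_def K2_def by (auto intro: quotientI)
  moreover have "K1 \<inter> K2 = {}"
    using disj eq_equiv_class_iff[OF eq] edI edJ unfolding K1_def K2_def by blast
  ultimately have "indep_var borel
      ((\<lambda>z. \<Prod>i\<in>I. z (R``{ed i}) (ed i)) \<circ> (\<lambda>\<omega>. restrict (\<lambda>C. \<lambda>pq\<in>C. Y pq \<omega>) K1))
      borel ((\<lambda>z. \<Prod>j\<in>J. z (R``{ed' j}) (ed' j)) \<circ> (\<lambda>\<omega>. restrict (\<lambda>C. \<lambda>pq\<in>C. Y pq \<omega>) K2))"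
    unfolding K1_def K2_def
    by (intro indep_var_compose[OF indep_var_restrict[OF ind]]
        measurable_prod_on_classes[OF eq edI] measurable_prod_on_classes[OF eq edJ])
  then have "indep_var borel (\<lambda>\<omega>. \<Prod>i\<in>I. Y (ed i) \<omega>) borel (\<lambda>\<omega>. \<Prod>j\<in>J. Y (ed' j) \<omega>)"
    unfolding comp_def K1_def K2_def
    unfolding prod_on_classes_restrict[OF eq edI] prod_on_classes_restrict[OF eq edJ] .
  then show ?thesis
    using indep_var_lebesgue_integral assms(8,9) by blast
qed

lemma abs_prod_le_one_plus_sum_power:
  fixes f :: "'i \<Rightarrow> real"
  assumes "finite I"
  shows "\<bar>\<Prod>i\<in>I. f i\<bar> \<le> 1 + (\<Sum>i\<in>I. \<bar>f i\<bar> ^ card I)"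
proof (cases "I = {}")
  case False
  obtain j where j: "j \<in> I" "\<bar>f j\<bar> = Max ((\<lambda>i. \<bar>f i\<bar>) ` I)"
    using Max_in[of "(\<lambda>i. \<bar>f i\<bar>) ` I"] assms False
    by (metis (no_types, lifting) empty_is_image finite_imageI imageE)
  have "\<bar>\<Prod>i\<in>I. f i\<bar> = (\<Prod>i\<in>I. \<bar>f i\<bar>)" by (simp add: abs_prod)
  also have "\<dots> \<le> (\<Prod>i\<in>I. \<bar>f j\<bar>)"
    by (intro prod_mono) (auto simp: j(2) assms)
  also have "\<dots> = \<bar>f j\<bar> ^ card I" by simp
  also have "\<dots> \<le> (\<Sum>i\<in>I. \<bar>f i\<bar> ^ card I)"
    by (rule member_le_sum[OF j(1)]) (auto simp: assms)
  finally show ?thesis by simp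
qed simp

lemma (in prob_space) prod_integrable_and_bound:
  fixes Y :: "'i \<Rightarrow> 'a \<Rightarrow> real"
  assumes fin: "finite I" and meas: "\<And>i. i \<in> I \<Longrightarrow> Y i \<in> borel_measurable M"
    and mom: "\<And>i. i \<in> I \<Longrightarrow>
      integrable M (\<lambda>\<omega>. \<bar>Y i \<omega>\<bar> ^ card I) \<and> expectation (\<lambda>\<omega>. \<bar>Y i \<omega>\<bar> ^ card I) \<le> C"
  shows "integrable M (\<lambda>\<omega>. \<Prod>i\<in>I. Y i \<omega>)"
    and "\<bar>expectation (\<lambda>\<omega>. \<Prod>i\<in>I. Y i \<omega>)\<bar> \<le> 1 + real (card I) * C"
proof -
  define g where "g \<omega> = 1 + (\<Sum>i\<in>I. \<bar>Y i \<omega>\<bar> ^ card I)" for \<omega>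
  have ig: "integrable M g" unfolding g_def
  proof (rule Bochner_Integration.integrable_add)
    show "integrable M (\<lambda>\<omega>. 1::real)" by simp
    show "integrable M (\<lambda>\<omega>. \<Sum>i\<in>I. \<bar>Y i \<omega>\<bar> ^ card I)"
      by (rule Bochner_Integration.integrable_sum) (use mom in blast)
  qed
  have bd: "\<bar>\<Prod>i\<in>I. Y i \<omega>\<bar> \<le> g \<omega>" for \<omega>
    unfolding g_def by (rule abs_prod_le_one_plus_sum_power[OF fin])
  have mp: "(\<lambda>\<omega>. \<Prod>i\<in>I. Y i \<omega>) \<in> borel_measurable M"
    using meas by (intro borel_measurable_prod) auto
  show ip: "integrable M (\<lambda>\<omega>. \<Prod>i\<in>I. Y i \<omega>)"
  proof (rule Bochner_Integration.integrable_bound[OF ig mp])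
    have "\<bar>\<Prod>i\<in>I. Y i x\<bar> \<le> \<bar>g x\<bar>" for x using bd[of x] by linarith
    then show "AE x in M. norm (\<Prod>i\<in>I. Y i x) \<le> norm (g x)" by simp
  qed
  have "\<bar>expectation (\<lambda>\<omega>. \<Prod>i\<in>I. Y i \<omega>)\<bar> \<le> expectation (\<lambda>\<omega>. \<bar>\<Prod>i\<in>I. Y i \<omega>\<bar>)"
    by (rule Bochner_Integration.integral_abs_bound)
  also have "\<dots> \<le> expectation g"
    by (rule Bochner_Integration.integral_mono) (use ip ig bd in auto)
  also have "expectation g = 1 + (\<Sum>i\<in>I. expectation (\<lambda>\<omega>. \<bar>Y i \<omega>\<bar> ^ card I))"
    unfolding g_def using mom by (simp add: integral_sum prob_space)
  also have "\<dots> \<le> 1 + (\<Sum>i\<in>I. C)"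
    using mom by (intro add_left_mono sum_mono) auto
  finally show "\<bar>expectation (\<lambda>\<omega>. \<Prod>i\<in>I. Y i \<omega>)\<bar> \<le> 1 + real (card I) * C" by simp
qed

lemma (in prob_space) integrable_centered_mult:
  fixes Z W :: "'a \<Rightarrow> real"
  assumes "integrable M Z" "integrable M W" "integrable M (\<lambda>\<omega>. Z \<omega> * W \<omega>)"
  shows "integrable M (\<lambda>\<omega>. (Z \<omega> - expectation Z) * (W \<omega> - expectation W))"
proof -
  have "(\<lambda>\<omega>. (Z \<omega> - expectation Z) * (W \<omega> - expectation W)) =
      (\<lambda>\<omega>. Z \<omega> * W \<omega> - expectation W * Z \<omega> - expectation Z * W \<omega> + expectation Z * expectation W)"
    by (auto simp: fun_eq_iff algebra_simps)
  then show ?thesis using assms by simp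
qed

lemma (in prob_space) expectation_centered_mult:
  fixes Z W :: "'a \<Rightarrow> real"
  assumes "integrable M Z" "integrable M W" "integrable M (\<lambda>\<omega>. Z \<omega> * W \<omega>)"
  shows "expectation (\<lambda>\<omega>. (Z \<omega> - expectation Z) * (W \<omega> - expectation W))
       = expectation (\<lambda>\<omega>. Z \<omega> * W \<omega>) - expectation Z * expectation W"
proof -
  have "(\<lambda>\<omega>. (Z \<omega> - expectation Z) * (W \<omega> - expectation W)) =
      (\<lambda>\<omega>. (Z \<omega> * W \<omega> - expectation W * Z \<omega>) - (expectation Z * W \<omega> - expectation Z * expectation W))"
    by (auto simp: fun_eq_iff algebra_simps)
  then show ?thesis using assms by (simp add: prob_space)
qed

lemma (in prob_space) variance_weighted_sum:
  fixes Z :: "'i \<Rightarrow> 'a \<Rightarrow> real"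
  assumes "finite I" and int: "\<And>i. i \<in> I \<Longrightarrow> integrable M (Z i)"
    and int_mult: "\<And>i j. i \<in> I \<Longrightarrow> j \<in> I \<Longrightarrow> integrable M (\<lambda>\<omega>. Z i \<omega> * Z j \<omega>)"
  shows "variance (\<lambda>\<omega>. \<Sum>i\<in>I. w i * Z i \<omega>) =
    (\<Sum>i\<in>I. \<Sum>j\<in>I. w i * w j *
       (expectation (\<lambda>\<omega>. Z i \<omega> * Z j \<omega>) - expectation (Z i) * expectation (Z j)))"
proof -
  define \<mu> where "\<mu> i = expectation (Z i)" for i
  have mean: "expectation (\<lambda>\<omega>. \<Sum>i\<in>I. w i * Z i \<omega>) = (\<Sum>i\<in>I. w i * \<mu> i)"
    unfolding \<mu>_def using int by (simp add: integral_sum)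
  have square: "((\<Sum>i\<in>I. w i * Z i \<omega>) - (\<Sum>i\<in>I. w i * \<mu> i))\<^sup>2 =
      (\<Sum>i\<in>I. \<Sum>j\<in>I. w i * w j * ((Z i \<omega> - \<mu> i) * (Z j \<omega> - \<mu> j)))" for \<omega>
  proof -
    have "(\<Sum>i\<in>I. w i * Z i \<omega>) - (\<Sum>i\<in>I. w i * \<mu> i) = (\<Sum>i\<in>I. w i * (Z i \<omega> - \<mu> i))"
      by (simp add: sum_subtractf right_diff_distrib)
    then show ?thesis by (simp add: power2_eq_square sum_product algebra_simps)
  qed
  have "variance (\<lambda>\<omega>. \<Sum>i\<in>I. w i * Z i \<omega>) =
      expectation (\<lambda>\<omega>. \<Sum>i\<in>I. \<Sum>j\<in>I. w i * w j * ((Z i \<omega> - \<mu> i) * (Z j \<omega> - \<mu> j)))"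
    unfolding mean square ..
  also have "\<dots> = (\<Sum>i\<in>I. \<Sum>j\<in>I. w i * w j * expectation (\<lambda>\<omega>. (Z i \<omega> - \<mu> i) * (Z j \<omega> - \<mu> j)))"
    using integrable_centered_mult[OF int int int_mult] unfolding \<mu>_def by (simp add: integral_sum)
  also have "\<dots> = (\<Sum>i\<in>I. \<Sum>j\<in>I. w i * w j *
                    (expectation (\<lambda>\<omega>. Z i \<omega> * Z j \<omega>) - expectation (Z i) * expectation (Z j)))"
    using expectation_centered_mult[OF int int int_mult] unfolding \<mu>_def by simp
  finally show ?thesis .
qed

section \<open>Counting labellings of a pair of closed walks\<close>

lemma card_restrict_insert_le:
  fixes G :: "('i \<Rightarrow> 'b) set"
  assumes fin: "finite G"
    and fib: "\<And>f. f \<in> (\<lambda>u. restrict u D) ` G \<Longrightarrow> card {u i | u. u \<in> G \<and> restrict u D = f} \<le> c"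
  shows "card ((\<lambda>u. restrict u (insert i D)) ` G) \<le> c * card ((\<lambda>u. restrict u D) ` G)"
proof -
  let ?H = "(\<lambda>f. {u i | u. u \<in> G \<and> restrict u D = f})"
  have inj: "inj_on (\<lambda>g. (restrict g D, g i)) ((\<lambda>u. restrict u (insert i D)) ` G)"
  proof (rule inj_onI)
    fix x y assume "x \<in> (\<lambda>u. restrict u (insert i D)) ` G" "y \<in> (\<lambda>u. restrict u (insert i D)) ` G"
      and eq: "(restrict x D, x i) = (restrict y D, y i)"
    then obtain u v where uv: "u \<in> G" "v \<in> G" "x = restrict u (insert i D)" "y = restrict v (insert i D)" by auto
    show "x = y" using eq unfolding uv by (auto simp: fun_eq_iff restrict_def split: if_splits)
  qed
  have sub: "(\<lambda>g. (restrict g D, g i)) ` ((\<lambda>u. restrict u (insert i D)) ` G)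
      \<subseteq> Sigma ((\<lambda>u. restrict u D) ` G) ?H"
  proof
    fix z assume "z \<in> (\<lambda>g. (restrict g D, g i)) ` ((\<lambda>u. restrict u (insert i D)) ` G)"
    then obtain u where u: "u \<in> G" "z = (restrict (restrict u (insert i D)) D, restrict u (insert i D) i)" by auto
    have "restrict (restrict u (insert i D)) D = restrict u D" by (auto simp: fun_eq_iff)
    then show "z \<in> Sigma ((\<lambda>u. restrict u D) ` G) ?H" using u by auto
  qed
  have finH: "finite (?H f)" for f
  proof -
    have "?H f \<subseteq> (\<lambda>u. u i) ` G" by auto
    then show ?thesis using fin finite_subset by blast
  qed
  have "card ((\<lambda>u. restrict u (insert i D)) ` G) = card ((\<lambda>g. (restrict g D, g i)) ` ((\<lambda>u. restrict u (insert i D)) ` G))"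
    using card_image[OF inj] by simp
  also have "\<dots> \<le> card (Sigma ((\<lambda>u. restrict u D) ` G) ?H)"
    by (rule card_mono[OF _ sub]) (use fin finH in auto)
  also have "\<dots> = (\<Sum>f\<in>(\<lambda>u. restrict u D) ` G. card (?H f))"
    by (rule card_SigmaI) (use fin finH in auto)
  also have "\<dots> \<le> (\<Sum>f\<in>(\<lambda>u. restrict u D) ` G. c)"
    by (rule sum_mono) (rule fib)
  also have "\<dots> = c * card ((\<lambda>u. restrict u D) ` G)" by simp
  finally show ?thesis .
qed

lemma card_image_le_half:
  assumes "finite A" and "\<And>x. x \<in> A \<Longrightarrow> \<exists>y\<in>A. y \<noteq> x \<and> f y = f x"
  shows "2 * card (f ` A) \<le> card A"
proof -
  have "2 \<le> card {x \<in> A. f x = c}" if c: "c \<in> f ` A" for c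
  proof -
    obtain x where "x \<in> A" "f x = c" using c by blast
    moreover obtain y where "y \<in> A" "y \<noteq> x" "f y = f x" using assms(2)[OF \<open>x \<in> A\<close>] by blast
    ultimately have "card {x, y} \<le> card {x \<in> A. f x = c}"
      by (intro card_mono) (auto simp: assms(1))
    then show ?thesis using \<open>y \<noteq> x\<close> by simp
  qed
  then have "(\<Sum>c\<in>f ` A. 2) \<le> (\<Sum>c\<in>f ` A. card {x \<in> A. f x = c})"
    by (rule sum_mono)
  also have "\<dots> = (\<Sum>c\<in>f ` A. \<Sum>x\<in>{x \<in> A. f x = c}. 1)" by simp
  also have "\<dots> = (\<Sum>x\<in>A. 1)"
    by (rule sum.group) (auto simp: assms(1))
  finally show ?thesis by (simp add: mult.commute)
qed

lemma card_band_le: "card {x \<in> {1..N}. nat \<bar>int c - int x\<bar> \<le> b} \<le> 2 * b + 1"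
proof -
  have "card {x \<in> {1..N}. nat \<bar>int c - int x\<bar> \<le> b} \<le> card {c - b..c + b}"
    by (intro card_mono) auto
  then show ?thesis by simp
qed

type_synonym edge_rel = "((nat \<times> nat) \<times> (nat \<times> nat)) set"

text \<open>A labelling \<open>u \<in> labellings N (2*k)\<close> encodes two closed walks of length \<open>k\<close>, the first on the
  positions \<open>0..k-1\<close> and the second on \<open>k..2k-1\<close>; \<open>pair_succ\<close> is the cyclic successor within
  each of them, and \<open>edge k u m\<close> is the edge leaving position \<open>m\<close>.\<close>

definition pair_succ :: "nat \<Rightarrow> nat \<Rightarrow> nat" where
  "pair_succ k m = (if m < k then Suc m mod k else k + Suc (m - k) mod k)"

definition edge :: "nat \<Rightarrow> (nat \<Rightarrow> nat) \<Rightarrow> nat \<Rightarrow> nat \<times> nat" where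
  "edge k u m = (u m, u (pair_succ k m))"

definition edges_repeated :: "edge_rel \<Rightarrow> nat \<Rightarrow> (nat \<Rightarrow> nat) \<Rightarrow> bool" where
  "edges_repeated R k u \<longleftrightarrow> (\<forall>m<2*k. \<exists>m'<2*k. m' \<noteq> m \<and> (edge k u m, edge k u m') \<in> R)"

definition in_band :: "nat \<Rightarrow> nat \<Rightarrow> (nat \<Rightarrow> nat) \<Rightarrow> bool" where
  "in_band b k u \<longleftrightarrow> (\<forall>m<2*k. nat \<bar>int (u m) - int (u (pair_succ k m))\<bar> \<le> b)"

definition contributing :: "edge_rel \<Rightarrow> nat \<Rightarrow> nat \<Rightarrow> (nat \<Rightarrow> nat) \<Rightarrow> bool" where
  "contributing R b k u \<longleftrightarrow> in_band b k u \<and> edges_repeated R k u \<and>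
     (\<exists>i<k. \<exists>j<k. (edge k u i, edge k u (k + j)) \<in> R)"

text \<open>A labelling is counted by revealing its labels position by position: first the endpoints of
  the edges \<open>0\<close> and \<open>k\<close>, then the label of \<open>Suc m\<close> for each inner step \<open>m\<close> in increasing order;
  the closing edges \<open>k-1\<close> and \<open>2k-1\<close> reveal nothing. An inner step is new if its edge is related
  to none of the edges \<open>0\<close>, \<open>k\<close> and of the earlier inner steps; only then is the band the sole
  constraint on the next label.\<close>

definition inner_steps :: "nat \<Rightarrow> nat set" where
  "inner_steps k = {m. 1 \<le> m \<and> m + 2 \<le> k} \<union> {m. k + 1 \<le> m \<and> m + 2 \<le> 2 * k}"

definition revealed :: "nat \<Rightarrow> nat \<Rightarrow> nat set" where
  "revealed k j = {0, pair_succ k 0, k, pair_succ k k} \<union> Suc ` {m \<in> inner_steps k. m < j}"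

definition earlier_steps :: "nat \<Rightarrow> nat \<Rightarrow> nat set" where
  "earlier_steps k m = {0, k} \<union> {m' \<in> inner_steps k. m' < m}"

definition new_steps :: "edge_rel \<Rightarrow> nat \<Rightarrow> (nat \<Rightarrow> nat) \<Rightarrow> nat set" where
  "new_steps R k u = {m \<in> inner_steps k. \<forall>m'\<in>earlier_steps k m. (edge k u m', edge k u m) \<notin> R}"

lemma pair_succ_lt:
  assumes "k \<ge> 1" "m < 2 * k"
  shows "pair_succ k m < 2 * k"
proof -
  have "Suc m mod k < k" "Suc (m - k) mod k < k" using assms(1) by auto
  then show ?thesis using assms(2) unfolding pair_succ_def by (split if_split) linarith
qed

lemma pair_succ_inner_step: "m \<in> inner_steps k \<Longrightarrow> pair_succ k m = Suc m"
  unfolding pair_succ_def inner_steps_def by auto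

lemma inner_step_Suc_lt: "m \<in> inner_steps k \<Longrightarrow> Suc m < 2 * k"
  unfolding inner_steps_def by auto

lemma inner_steps_subset: "inner_steps k \<subseteq> {..<2*k}"
  unfolding inner_steps_def by auto

lemma finite_inner_steps: "finite (inner_steps k)"
  using inner_steps_subset finite_subset by blast

lemma card_inner_steps_le: "card (inner_steps k) \<le> 2 * k"
  using card_mono[OF _ inner_steps_subset] by auto

lemma inner_step_revealed: "m \<in> inner_steps k \<Longrightarrow> m \<in> revealed k m"
proof -
  assume m: "m \<in> inner_steps k"
  show ?thesis
  proof (cases "m = 1 \<or> m = k + 1")
    case True
    then show ?thesis using m unfolding revealed_def pair_succ_def inner_steps_def by auto
  next
    case False
    then have "m - 1 \<in> inner_steps k" "m - 1 < m" using m unfolding inner_steps_def by auto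
    then have "Suc (m - 1) \<in> revealed k m" unfolding revealed_def by blast
    then show ?thesis using m unfolding inner_steps_def by auto
  qed
qed

lemma revealed_mono: "j \<le> j' \<Longrightarrow> revealed k j \<subseteq> revealed k j'"
  unfolding revealed_def by auto

lemma revealed_Suc:
  "revealed k (Suc j) = (if j \<in> inner_steps k then insert (Suc j) (revealed k j) else revealed k j)"
  unfolding revealed_def by (auto simp: less_Suc_eq)

lemma revealed_subset: "k \<ge> 1 \<Longrightarrow> revealed k j \<subseteq> {..<2*k}"
  unfolding revealed_def using inner_step_Suc_lt pair_succ_lt[of k 0] pair_succ_lt[of k k] by auto

lemma revealed_all:
  assumes k: "k \<ge> 1"
  shows "revealed k (2*k) = {..<2*k}"
proof
  show "{..<2*k} \<subseteq> revealed k (2*k)"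
  proof
    fix m assume "m \<in> {..<2*k}"
    then have m: "m < 2 * k" by auto
    consider "m = 0" | "m = k" | "k = 1" | "m = 1" | "m = k + 1" | "m - 1 \<in> inner_steps k"
      using k m unfolding inner_steps_def by fastforce
    then show "m \<in> revealed k (2*k)"
    proof cases
      case 6
      then have "Suc (m - 1) \<in> revealed k (2*k)" unfolding revealed_def using m by fastforce
      then show ?thesis using 6 unfolding inner_steps_def by (auto simp: Suc_diff_le)
    qed (use m in \<open>auto simp: revealed_def pair_succ_def\<close>)
  qed
qed (rule revealed_subset[OF k])

lemma earlier_steps_revealed:
  assumes j: "j \<in> inner_steps k" and m: "m \<in> earlier_steps k j"
  shows "m \<in> revealed k j" "pair_succ k m \<in> revealed k j"
proof -
  consider "m = 0" | "m = k" | "m \<in> inner_steps k" "m < j" using m unfolding earlier_steps_def by auto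
  then have "m \<in> revealed k j \<and> pair_succ k m \<in> revealed k j"
  proof cases
    case 3
    then show ?thesis
      using inner_step_revealed[OF 3(1)] revealed_mono[of m j k] pair_succ_inner_step[OF 3(1)]
      unfolding revealed_def by auto
  qed (auto simp: revealed_def)
  then show "m \<in> revealed k j" "pair_succ k m \<in> revealed k j" by auto
qed

locale walk_pair_count =
  fixes N k b B :: nat and R :: edge_rel
  assumes k_pos: "k \<ge> 1" and equiv_R: "equiv ({1..N} \<times> {1..N}) R"
    and card_related_le: "\<And>p q r. p \<in> {1..N} \<Longrightarrow> q \<in> {1..N} \<Longrightarrow> r \<in> {1..N} \<Longrightarrow>
               card {s \<in> {1..N}. ((p, q), (r, s)) \<in> R} \<le> B"
begin

lemma edge_in: "u \<in> labellings N (2*k) \<Longrightarrow> m < 2*k \<Longrightarrow> edge k u m \<in> {1..N} \<times> {1..N}"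
  unfolding edge_def using pair_succ_lt[OF k_pos, of m] by (auto simp: PiE_def Pi_def)

text \<open>Edge \<open>0\<close> and the new steps lie in pairwise different classes, while every class met by
  the \<open>2k\<close> edges contains at least two of them.\<close>

lemma card_new_steps_less:
  assumes u: "u \<in> labellings N (2*k)" and rep: "edges_repeated R k u"
  shows "card (new_steps R k u) < k"
proof -
  define cl where "cl m = R``{edge k u m}" for m
  have cl_eq: "cl m = cl m' \<longleftrightarrow> (edge k u m, edge k u m') \<in> R" if "m < 2*k" "m' < 2*k" for m m'
    using equiv_class_eq_iff[OF equiv_R] edge_in[OF u that(1)] edge_in[OF u that(2)]
    unfolding cl_def by auto
  have "\<exists>m'\<in>{..<2*k}. m' \<noteq> m \<and> cl m' = cl m" if m: "m \<in> {..<2*k}" for m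
  proof -
    obtain m' where m': "m' < 2*k" "m' \<noteq> m" "(edge k u m, edge k u m') \<in> R"
      using rep m unfolding edges_repeated_def by auto
    then have "cl m = cl m'" using cl_eq m by simp
    then show ?thesis using m' by auto
  qed
  then have "2 * card (cl ` {..<2*k}) \<le> card {..<2*k}"
    by (intro card_image_le_half) auto
  then have card_classes: "card (cl ` {..<2*k}) \<le> k" by simp
  have new_lt: "m < 2 * k" if "m \<in> insert 0 (new_steps R k u)" for m
    using that k_pos inner_steps_subset unfolding new_steps_def by auto
  have distinct: "cl a \<noteq> cl c"
    if "a \<in> insert 0 (new_steps R k u)" "c \<in> insert 0 (new_steps R k u)" "a < c" for a c
  proof -
    have "c \<in> new_steps R k u" "a \<in> earlier_steps k c"
      using that unfolding earlier_steps_def new_steps_def by auto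
    then have "(edge k u a, edge k u c) \<notin> R" unfolding new_steps_def by auto
    then show ?thesis using cl_eq new_lt that by simp
  qed
  have "inj_on cl (insert 0 (new_steps R k u))"
    by (rule inj_onI) (metis distinct linorder_neqE_nat)
  then have "card (insert 0 (new_steps R k u)) \<le> card (cl ` {..<2*k})"
    using new_lt by (intro card_inj_on_le) auto
  moreover have "0 \<notin> new_steps R k u" unfolding new_steps_def inner_steps_def by auto
  moreover have "finite (new_steps R k u)" using finite_inner_steps unfolding new_steps_def by auto
  ultimately show ?thesis using card_classes by simp
qed

definition linked_pairs :: "(nat \<Rightarrow> nat) set" where
  "linked_pairs = {u \<in> labellings N (2*k).
     (edge k u 0, edge k u k) \<in> R \<and> edges_repeated R k u \<and> in_band b k u}"

definition linked_pairs_with :: "nat set \<Rightarrow> (nat \<Rightarrow> nat) set" where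
  "linked_pairs_with S = {u \<in> linked_pairs. new_steps R k u = S}"

definition partial_labellings :: "nat set \<Rightarrow> nat \<Rightarrow> (nat \<Rightarrow> nat) set" where
  "partial_labellings S j = (\<lambda>u. restrict u (revealed k j)) ` linked_pairs_with S"

definition choices :: "nat set \<Rightarrow> nat \<Rightarrow> nat" where
  "choices S m = (if m \<in> S then 2 * b + 1 else 2 * k * B + 1)"

definition related_quads :: "(nat \<times> nat \<times> nat \<times> nat) set" where
  "related_quads = {(p, q, r, s). p \<in> {1..N} \<and> q \<in> {1..N} \<and> r \<in> {1..N} \<and> s \<in> {1..N}
     \<and> ((p, q), (r, s)) \<in> R}"

lemma finite_linked_pairs: "finite linked_pairs"
  unfolding linked_pairs_def using finite_labellings by simp

lemma finite_linked_pairs_with: "finite (linked_pairs_with S)"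
  unfolding linked_pairs_with_def using finite_linked_pairs by auto

lemma card_next_label_new:
  assumes j: "j \<in> inner_steps k" "j \<in> S"
  shows "card {u (Suc j) | u. u \<in> linked_pairs_with S \<and> restrict u (revealed k j) = f} \<le> 2 * b + 1"
proof -
  have "{u (Suc j) | u. u \<in> linked_pairs_with S \<and> restrict u (revealed k j) = f}
        \<subseteq> {x \<in> {1..N}. nat \<bar>int (f j) - int x\<bar> \<le> b}"
  proof (rule subsetI)
    fix x assume "x \<in> {u (Suc j) | u. u \<in> linked_pairs_with S \<and> restrict u (revealed k j) = f}"
    then obtain u where "u \<in> linked_pairs_with S" and f: "f = restrict u (revealed k j)"
      and x: "x = u (Suc j)" by blast
    then have u: "u \<in> labellings N (2*k)" "in_band b k u"
      unfolding linked_pairs_with_def linked_pairs_def by auto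
    have "nat \<bar>int (u j) - int (u (pair_succ k j))\<bar> \<le> b"
      using u(2) Suc_lessD[OF inner_step_Suc_lt[OF j(1)]] unfolding in_band_def by simp
    moreover have "u (Suc j) \<in> {1..N}"
      using PiE_mem[OF u(1)] inner_step_Suc_lt[OF j(1)] by simp
    ultimately show "x \<in> {x \<in> {1..N}. nat \<bar>int (f j) - int x\<bar> \<le> b}"
      using inner_step_revealed[OF j(1)] pair_succ_inner_step[OF j(1)] unfolding f x by simp
  qed
  then have "card {u (Suc j) | u. u \<in> linked_pairs_with S \<and> restrict u (revealed k j) = f}
      \<le> card {x \<in> {1..N}. nat \<bar>int (f j) - int x\<bar> \<le> b}"
    by (rule card_mono[rotated]) auto
  then show ?thesis using card_band_le order_trans by blast
qed

lemma card_next_label_old: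
  assumes j: "j \<in> inner_steps k" "j \<notin> S"
    and f: "f \<in> partial_labellings S j"
  shows "card {u (Suc j) | u. u \<in> linked_pairs_with S \<and> restrict u (revealed k j) = f} \<le> 2 * k * B"
proof -
  obtain u0 where u0: "u0 \<in> labellings N (2*k)" "f = restrict u0 (revealed k j)"
    using f unfolding partial_labellings_def linked_pairs_with_def linked_pairs_def by auto
  have f_in: "f m \<in> {1..N}" if "m \<in> revealed k j" for m
    using PiE_mem[OF u0(1)] that revealed_subset[OF k_pos] unfolding u0(2) by auto
  define A where "A m' = {s \<in> {1..N}. ((f m', f (pair_succ k m')), (f j, s)) \<in> R}" for m'
  have "{u (Suc j) | u. u \<in> linked_pairs_with S \<and> restrict u (revealed k j) = f}
        \<subseteq> (\<Union>m'\<in>earlier_steps k j. A m')"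
  proof safe
    fix u assume u: "u \<in> linked_pairs_with S" and f: "f = restrict u (revealed k j)"
    then have "j \<notin> new_steps R k u" using j(2) unfolding linked_pairs_with_def by auto
    then obtain m' where m': "m' \<in> earlier_steps k j" "(edge k u m', edge k u j) \<in> R"
      using j(1) unfolding new_steps_def by auto
    have "u \<in> labellings N (2*k)" using u unfolding linked_pairs_with_def linked_pairs_def by auto
    then have "u (Suc j) \<in> {1..N}" using inner_step_Suc_lt[OF j(1)] by (auto simp: PiE_def Pi_def)
    moreover have "((f m', f (pair_succ k m')), (f j, u (Suc j))) \<in> R"
      using m'(2) earlier_steps_revealed[OF j(1) m'(1)] inner_step_revealed[OF j(1)]
        pair_succ_inner_step[OF j(1)]
      unfolding f edge_def by simp
    ultimately show "u (Suc j) \<in> (\<Union>m'\<in>earlier_steps k j. A m')"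
      using m'(1) unfolding A_def by blast
  qed
  moreover have fin: "finite (earlier_steps k j)"
    unfolding earlier_steps_def using finite_inner_steps by auto
  ultimately have "card {u (Suc j) | u. u \<in> linked_pairs_with S \<and> restrict u (revealed k j) = f}
      \<le> card (\<Union>m'\<in>earlier_steps k j. A m')"
    by (intro card_mono) (auto simp: A_def)
  also have "\<dots> \<le> (\<Sum>m'\<in>earlier_steps k j. card (A m'))"
    by (rule card_UN_le[OF fin])
  also have "\<dots> \<le> (\<Sum>m'\<in>earlier_steps k j. B)"
    unfolding A_def
    by (intro sum_mono card_related_le f_in earlier_steps_revealed[OF j(1)] inner_step_revealed[OF j(1)])
  also have "\<dots> \<le> 2 * k * B"
  proof -
    have "earlier_steps k j \<subseteq> {..<2*k}"
      unfolding earlier_steps_def using inner_steps_subset k_pos by auto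
    then show ?thesis using card_mono[of "{..<2*k}" "earlier_steps k j"] by (simp add: mult_right_mono)
  qed
  finally show ?thesis .
qed

lemma card_next_label_le:
  assumes "j \<in> inner_steps k" "f \<in> partial_labellings S j"
  shows "card {u (Suc j) | u. u \<in> linked_pairs_with S \<and> restrict u (revealed k j) = f} \<le> choices S j"
  using card_next_label_new[of j S f] card_next_label_old[of j S f] assms
  unfolding choices_def by fastforce

lemma card_partial_labellings_le:
  "card (partial_labellings S j) \<le> card (partial_labellings S 0) * (\<Prod>m\<in>{m\<in>inner_steps k. m < j}. choices S m)"
proof (induction j)
  case (Suc j)
  show ?case
  proof (cases "j \<in> inner_steps k")
    case True
    have "card (partial_labellings S (Suc j))
        = card ((\<lambda>u. restrict u (insert (Suc j) (revealed k j))) ` linked_pairs_with S)"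
      using True unfolding partial_labellings_def by (simp add: revealed_Suc)
    also have "\<dots> \<le> choices S j * card (partial_labellings S j)"
      unfolding partial_labellings_def
      by (rule card_restrict_insert_le[OF finite_linked_pairs_with card_next_label_le[OF True]])
        (simp add: partial_labellings_def)
    also have "\<dots> \<le> choices S j * (card (partial_labellings S 0) * (\<Prod>m\<in>{m\<in>inner_steps k. m < j}. choices S m))"
      by (rule mult_le_mono2[OF Suc.IH])
    also have "\<dots> = card (partial_labellings S 0) * (\<Prod>m\<in>{m\<in>inner_steps k. m < Suc j}. choices S m)"
    proof -
      have "{m\<in>inner_steps k. m < Suc j} = insert j {m\<in>inner_steps k. m < j}" using True by auto
      then show ?thesis by (simp add: mult_ac)
    qed
    finally show ?thesis .
  next
    case False
    then have "{m\<in>inner_steps k. m < Suc j} = {m\<in>inner_steps k. m < j}" by (auto simp: less_Suc_eq)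
    then show ?thesis using Suc.IH False by (simp add: revealed_Suc partial_labellings_def)
  qed
qed simp

lemma card_partial_labellings_0_le: "card (partial_labellings S 0) \<le> card related_quads"
proof -
  let ?h = "\<lambda>f. (f 0, f (pair_succ k 0), f k, f (pair_succ k k))"
  have revealed0: "revealed k 0 = {0, pair_succ k 0, k, pair_succ k k}" unfolding revealed_def by auto
  have "inj_on ?h (partial_labellings S 0)"
    unfolding partial_labellings_def by (rule inj_onI) (auto simp: revealed0 fun_eq_iff)
  moreover have "?h ` partial_labellings S 0 \<subseteq> related_quads"
    unfolding partial_labellings_def
  proof safe
    fix v assume "v \<in> linked_pairs_with S"
    then have v: "v \<in> labellings N (2*k)" "(edge k v 0, edge k v k) \<in> R"
      unfolding linked_pairs_with_def linked_pairs_def by auto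
    have "edge k v 0 \<in> {1..N} \<times> {1..N}" "edge k v k \<in> {1..N} \<times> {1..N}"
      using edge_in[OF v(1)] k_pos by auto
    then show "?h (restrict v (revealed k 0)) \<in> related_quads"
      using v(2) unfolding related_quads_def edge_def revealed0 by auto
  qed
  moreover have "finite related_quads"
    by (rule finite_subset[of _ "{1..N} \<times> {1..N} \<times> {1..N} \<times> {1..N}"]) (auto simp: related_quads_def)
  ultimately show ?thesis by (rule card_inj_on_le)
qed

lemma card_linked_pairs_with_le:
  "card (linked_pairs_with S) \<le> card related_quads * (2*b+1)^(k-1) * (2*k*B+1)^(2*k)"
proof (cases "linked_pairs_with S = {}")
  case False
  then obtain u where "u \<in> linked_pairs_with S" by auto
  then have u: "u \<in> labellings N (2*k)" "edges_repeated R k u" "new_steps R k u = S"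
    unfolding linked_pairs_with_def linked_pairs_def by auto
  have card_S: "card S \<le> k - 1" using card_new_steps_less[OF u(1,2)] u(3) by simp
  have S_sub: "S \<subseteq> inner_steps k" using u(3) unfolding new_steps_def by auto
  have "restrict v {..<2*k} = v" if "v \<in> linked_pairs_with S" for v
    using that unfolding linked_pairs_with_def linked_pairs_def by (auto simp: PiE_def extensional_def fun_eq_iff)
  then have "card (linked_pairs_with S) = card (partial_labellings S (2*k))"
    unfolding partial_labellings_def revealed_all[OF k_pos] by (simp add: image_cong[OF refl] image_ident)
  also have "\<dots> \<le> card related_quads * (\<Prod>m\<in>{m\<in>inner_steps k. m < 2*k}. choices S m)"
    using card_partial_labellings_le card_partial_labellings_0_le mult_le_mono1 order_trans by blast
  also have "{m\<in>inner_steps k. m < 2*k} = inner_steps k" using inner_steps_subset by auto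
  also have "(\<Prod>m\<in>inner_steps k. choices S m) = (2*b+1)^card S * (2*k*B+1)^card (inner_steps k - S)"
    unfolding choices_def prod.If_cases[OF finite_inner_steps]
    using S_sub by (simp add: Int_absorb1 Diff_eq)
  also have "\<dots> \<le> (2*b+1)^(k-1) * (2*k*B+1)^(2*k)"
  proof (rule mult_le_mono)
    have "card (inner_steps k - S) \<le> 2*k"
      using card_inner_steps_le[of k] card_mono[OF finite_inner_steps, of "inner_steps k - S" k] by auto
    then show "(2*k*B+1)^card (inner_steps k - S) \<le> (2*k*B+1)^(2*k)" by (intro power_increasing) auto
  qed (use card_S in \<open>intro power_increasing, auto\<close>)
  finally show ?thesis by (simp add: mult.assoc)
qed simp

lemma card_linked_pairs_le: "card linked_pairs \<le> 4^k * card related_quads * (2*b+1)^(k-1) * (2*k*B+1)^(2*k)"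
proof -
  have "linked_pairs = (\<Union>S\<in>Pow (inner_steps k). linked_pairs_with S)"
  proof
    show "linked_pairs \<subseteq> (\<Union>S\<in>Pow (inner_steps k). linked_pairs_with S)"
    proof
      fix u assume "u \<in> linked_pairs"
      moreover have "new_steps R k u \<in> Pow (inner_steps k)" unfolding new_steps_def by blast
      ultimately show "u \<in> (\<Union>S\<in>Pow (inner_steps k). linked_pairs_with S)"
        unfolding linked_pairs_with_def by blast
    qed
    show "(\<Union>S\<in>Pow (inner_steps k). linked_pairs_with S) \<subseteq> linked_pairs"
      unfolding linked_pairs_with_def by blast
  qed
  then have "card linked_pairs \<le> (\<Sum>S\<in>Pow (inner_steps k). card (linked_pairs_with S))"
    using card_UN_le[of "Pow (inner_steps k)" linked_pairs_with] finite_inner_steps by simp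
  also have "\<dots> \<le> (\<Sum>S\<in>Pow (inner_steps k). card related_quads * (2*b+1)^(k-1) * (2*k*B+1)^(2*k))"
    by (rule sum_mono) (rule card_linked_pairs_with_le)
  also have "\<dots> = 2^(card (inner_steps k)) * (card related_quads * (2*b+1)^(k-1) * (2*k*B+1)^(2*k))"
    using finite_inner_steps by (simp add: card_Pow)
  also have "\<dots> \<le> 4^k * (card related_quads * (2*b+1)^(k-1) * (2*k*B+1)^(2*k))"
  proof (rule mult_le_mono1)
    have "(2::nat)^(card (inner_steps k)) \<le> 2^(2*k)"
      using card_inner_steps_le by (intro power_increasing) auto
    also have "(2::nat)^(2*k) = 4^k" by (simp add: power_mult)
    finally show "(2::nat)^(card (inner_steps k)) \<le> 4^k" .
  qed
  finally show ?thesis by (simp add: mult.assoc)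
qed


lemma card_related_quads_le:
  "card related_quads \<le> N * (MAX p\<in>{1..N}. card {(q, r, s). q \<in> {1..N} \<and> r \<in> {1..N} \<and> s \<in> {1..N}
     \<and> ((p, q), (r, s)) \<in> R})"
proof -
  let ?S = "\<lambda>p. {(q, r, s). q \<in> {1..N} \<and> r \<in> {1..N} \<and> s \<in> {1..N} \<and> ((p, q), (r, s)) \<in> R}"
  have "related_quads = (\<Union>p\<in>{1..N}. (\<lambda>(q, r, s). (p, q, r, s)) ` ?S p)"
    unfolding related_quads_def by auto
  then have "card related_quads \<le> (\<Sum>p\<in>{1..N}. card ((\<lambda>(q, r, s). (p, q, r, s)) ` ?S p))"
    using card_UN_le[of "{1..N}"] by simp
  also have "\<dots> \<le> (\<Sum>p\<in>{1..N}. card (?S p))"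
    by (intro sum_mono card_image_le)
      (rule finite_subset[of _ "{1..N} \<times> {1..N} \<times> {1..N}"], auto)
  also have "\<dots> \<le> (\<Sum>p\<in>{1..N}. MAX p\<in>{1..N}. card (?S p))"
    by (intro sum_mono Max_ge) auto
  finally show ?thesis by simp
qed

text \<open>Rotating the first walk by \<open>i\<close> and the second by \<open>j\<close> moves a pair of related edges
  \<open>i\<close> and \<open>k + j\<close> to the positions \<open>0\<close> and \<open>k\<close>.\<close>

definition rotate_walks :: "nat \<Rightarrow> nat \<Rightarrow> nat \<Rightarrow> nat" where
  "rotate_walks i j m = (if m < k then (m + i) mod k else k + (m - k + j) mod k)"

lemma rotate_walks_lt: "m < 2*k \<Longrightarrow> rotate_walks i j m < 2*k"
  using k_pos mod_less_divisor[of k "m + i"] mod_less_divisor[of k "m - k + j"]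
  unfolding rotate_walks_def by (split if_split) linarith

lemma pair_succ_rotate_walks: "m < 2*k \<Longrightarrow> pair_succ k (rotate_walks i j m) = rotate_walks i j (pair_succ k m)"
proof -
  assume m: "m < 2*k"
  have kp: "k > 0" using k_pos by auto
  show ?thesis
  proof (cases "m < k")
    case True
    have a: "(m + i) mod k < k" using kp by auto
    have b: "Suc m mod k < k" using kp by auto
    have "pair_succ k (rotate_walks i j m) = Suc ((m + i) mod k) mod k"
      using True a unfolding rotate_walks_def pair_succ_def by simp
    also have "\<dots> = (Suc m + i) mod k" by (simp add: mod_Suc_eq)
    also have "\<dots> = (Suc m mod k + i) mod k" by (simp add: mod_add_left_eq)
    also have "\<dots> = rotate_walks i j (pair_succ k m)"
      using True b unfolding rotate_walks_def pair_succ_def by simp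
    finally show ?thesis .
  next
    case False
    have a: "(m - k + j) mod k < k" using kp by auto
    have b: "Suc (m - k) mod k < k" using kp by auto
    have "pair_succ k (rotate_walks i j m) = k + Suc ((m - k + j) mod k) mod k"
      using False a unfolding rotate_walks_def pair_succ_def by simp
    also have "\<dots> = k + (Suc (m - k) + j) mod k" by (simp add: mod_Suc_eq)
    also have "\<dots> = k + (Suc (m - k) mod k + j) mod k" by (simp add: mod_add_left_eq)
    also have "\<dots> = rotate_walks i j (pair_succ k m)"
      using False b unfolding rotate_walks_def pair_succ_def by simp
    finally show ?thesis .
  qed
qed

lemma inj_on_rotate_walks: "inj_on (rotate_walks i j) {..<2*k}"
proof (rule inj_onI)
  fix x y assume x: "x \<in> {..<2*k}" and y: "y \<in> {..<2*k}" and e: "rotate_walks i j x = rotate_walks i j y"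
  have kp: "k > 0" using k_pos by auto
  have lt: "(x + i) mod k < k" "(y + i) mod k < k" "(x - k + j) mod k < k" "(y - k + j) mod k < k"
    using kp by auto
  show "x = y"
  proof (cases "x < k"; cases "y < k")
    assume "x < k" "y < k"
    then have "(x + i) mod k = (y + i) mod k" using e unfolding rotate_walks_def by simp
    then have "x mod k = y mod k" using nat_mod_eq_iff by auto
    then show ?thesis using \<open>x < k\<close> \<open>y < k\<close> by simp
  next
    assume "x < k" "\<not> y < k" then show ?thesis using e lt unfolding rotate_walks_def by simp
  next
    assume "\<not> x < k" "y < k" then show ?thesis using e lt unfolding rotate_walks_def by simp
  next
    assume xy: "\<not> x < k" "\<not> y < k"
    then have "(x - k + j) mod k = (y - k + j) mod k" using e unfolding rotate_walks_def by simp
    then have "(x - k) mod k = (y - k) mod k" using nat_mod_eq_iff by auto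
    then show ?thesis using xy x y by simp
  qed
qed

lemma rotate_walks_image: "rotate_walks i j ` {..<2*k} = {..<2*k}"
  by (rule endo_inj_surj) (use inj_on_rotate_walks rotate_walks_lt in auto)

lemma edge_rotate_walks:
  assumes "m < 2*k"
  shows "edge k (restrict (u \<circ> rotate_walks i j) {..<2*k}) m = edge k u (rotate_walks i j m)"
  unfolding edge_def using assms pair_succ_lt[OF k_pos assms] pair_succ_rotate_walks[OF assms] by simp

lemma edges_repeated_rotate_walks:
  assumes "edges_repeated R k u"
  shows "edges_repeated R k (restrict (u \<circ> rotate_walks i j) {..<2*k})"
  unfolding edges_repeated_def
proof (intro allI impI)
  fix m assume m: "m < 2*k"
  obtain m'' where m'': "m'' < 2*k" "m'' \<noteq> rotate_walks i j m"
      "(edge k u (rotate_walks i j m), edge k u m'') \<in> R"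
    using assms rotate_walks_lt[OF m] unfolding edges_repeated_def by blast
  obtain m' where m': "m' < 2*k" "m'' = rotate_walks i j m'"
    using m''(1) rotate_walks_image by (metis imageE lessThan_iff)
  have "m' \<noteq> m" using m' m'' by auto
  moreover have "(edge k (restrict (u \<circ> rotate_walks i j) {..<2*k}) m,
                  edge k (restrict (u \<circ> rotate_walks i j) {..<2*k}) m') \<in> R"
    unfolding edge_rotate_walks[OF m] edge_rotate_walks[OF m'(1)] using m' m'' by simp
  ultimately show "\<exists>m'<2*k. m' \<noteq> m \<and> (edge k (restrict (u \<circ> rotate_walks i j) {..<2*k}) m,
                                   edge k (restrict (u \<circ> rotate_walks i j) {..<2*k}) m') \<in> R"
    using m'(1) by blast
qed

lemma in_band_rotate_walks:
  assumes "in_band b k u"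
  shows "in_band b k (restrict (u \<circ> rotate_walks i j) {..<2*k})"
  unfolding in_band_def
proof (intro allI impI)
  fix m assume m: "m < 2*k"
  have "nat \<bar>int (u (rotate_walks i j m)) - int (u (pair_succ k (rotate_walks i j m)))\<bar> \<le> b"
    using assms rotate_walks_lt[OF m] unfolding in_band_def by blast
  then show "nat \<bar>int (restrict (u \<circ> rotate_walks i j) {..<2*k} m)
                 - int (restrict (u \<circ> rotate_walks i j) {..<2*k} (pair_succ k m))\<bar> \<le> b"
    using edge_rotate_walks[OF m, of u i j] unfolding edge_def by simp
qed

lemma rotate_walks_linked:
  assumes u: "u \<in> labellings N (2*k)" "in_band b k u" "edges_repeated R k u"
    and ij: "i < k" "j < k" "(edge k u i, edge k u (k + j)) \<in> R"
  shows "restrict (u \<circ> rotate_walks i j) {..<2*k} \<in> linked_pairs"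
proof -
  have "rotate_walks i j 0 = i" "rotate_walks i j k = k + j"
    using ij k_pos unfolding rotate_walks_def by auto
  then have "(edge k (restrict (u \<circ> rotate_walks i j) {..<2*k}) 0,
              edge k (restrict (u \<circ> rotate_walks i j) {..<2*k}) k) \<in> R"
    using edge_rotate_walks[of 0 u i j] edge_rotate_walks[of k u i j] k_pos ij(3) by simp
  moreover have "restrict (u \<circ> rotate_walks i j) {..<2*k} \<in> labellings N (2*k)"
    using u(1) rotate_walks_lt by (auto simp: PiE_def Pi_def)
  ultimately show ?thesis
    unfolding linked_pairs_def
    using in_band_rotate_walks[OF u(2)] edges_repeated_rotate_walks[OF u(3)] by blast
qed

lemma card_contributing_le: "card {u \<in> labellings N (2*k). contributing R b k u} \<le> k * k * card linked_pairs"
proof -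
  define G where "G i j = {u \<in> labellings N (2*k). in_band b k u \<and> edges_repeated R k u
                           \<and> (edge k u i, edge k u (k + j)) \<in> R}" for i j
  have card_G: "card (G i j) \<le> card linked_pairs" if "i < k" "j < k" for i j
  proof (rule card_inj_on_le[OF _ _ finite_linked_pairs])
    show "inj_on (\<lambda>u. restrict (u \<circ> rotate_walks i j) {..<2*k}) (G i j)"
    proof (rule inj_onI)
      fix u w assume "u \<in> G i j" "w \<in> G i j"
        and eq: "restrict (u \<circ> rotate_walks i j) {..<2*k} = restrict (w \<circ> rotate_walks i j) {..<2*k}"
      have "u (rotate_walks i j m) = w (rotate_walks i j m)" if "m < 2*k" for m
        using fun_cong[OF eq, of m] that by simp
      moreover have "\<exists>m'<2*k. m = rotate_walks i j m'" if "m < 2*k" for m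
        using that rotate_walks_image by (metis imageE lessThan_iff)
      ultimately have "u m = w m" if "m < 2*k" for m
        using that by metis
      then show "u = w" using \<open>u \<in> G i j\<close> \<open>w \<in> G i j\<close> unfolding G_def
        by (intro PiE_ext[of u "{..<2*k}" "\<lambda>_. {1..N}" w]) auto
    qed
    show "(\<lambda>u. restrict (u \<circ> rotate_walks i j) {..<2*k}) ` G i j \<subseteq> linked_pairs"
    proof (rule image_subsetI)
      fix u assume "u \<in> G i j"
      then show "restrict (u \<circ> rotate_walks i j) {..<2*k} \<in> linked_pairs"
        using rotate_walks_linked that unfolding G_def by simp
    qed
  qed
  have "{u \<in> labellings N (2*k). contributing R b k u} = (\<Union>i\<in>{..<k}. \<Union>j\<in>{..<k}. G i j)"
    unfolding contributing_def G_def by auto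
  then have "card {u \<in> labellings N (2*k). contributing R b k u} \<le> (\<Sum>i\<in>{..<k}. card (\<Union>j\<in>{..<k}. G i j))"
    using card_UN_le[of "{..<k}" "\<lambda>i. \<Union>j\<in>{..<k}. G i j"] by simp
  also have "\<dots> \<le> (\<Sum>i\<in>{..<k}. \<Sum>j\<in>{..<k}. card (G i j))"
    by (intro sum_mono card_UN_le) simp
  also have "\<dots> \<le> (\<Sum>i\<in>{..<k}. \<Sum>j\<in>{..<k}. card linked_pairs)"
    by (intro sum_mono card_G) auto
  finally show ?thesis by simp
qed


lemma card_contributing_bound:
  "card {u \<in> labellings N (2*k). contributing R b k u}
   \<le> k * k * 4^k * (2*k*B+1)^(2*k) * N * (MAX p\<in>{1..N}. card {(q, r, s). q \<in> {1..N} \<and> r \<in> {1..N}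
        \<and> s \<in> {1..N} \<and> ((p, q), (r, s)) \<in> R}) * (2*b+1)^(k-1)"
proof -
  have "card {u \<in> labellings N (2*k). contributing R b k u}
      \<le> k * k * (4^k * card related_quads * (2*b+1)^(k-1) * (2*k*B+1)^(2*k))"
    using card_contributing_le card_linked_pairs_le by (meson le_trans mult_le_mono2)
  also have "\<dots> \<le> k * k * (4^k * (N * (MAX p\<in>{1..N}. card {(q, r, s). q \<in> {1..N} \<and> r \<in> {1..N}
        \<and> s \<in> {1..N} \<and> ((p, q), (r, s)) \<in> R})) * (2*b+1)^(k-1) * (2*k*B+1)^(2*k))"
    using card_related_quads_le by (intro mult_le_mono2 mult_le_mono1) auto
  finally show ?thesis by (simp add: mult_ac)
qed

end

section \<open>The variance bound for a fixed matrix size\<close>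

lemma band_power_ratio_le:
  fixes x :: real and n :: nat
  assumes x: "x \<ge> 1" and n: "n \<ge> 1"
  shows "(2*x+1)^(n-1) / (2*x)^n \<le> 3^n / x"
proof -
  have a: "(2*x+1)^(n-1) \<le> (3*x)^(n-1)" using x by (intro power_mono) auto
  have "(3*x)^(n-1) * x = 3^(n-1) * x^n"
  proof -
    have "x^n = x^(n-1) * x" using n by (metis Suc_diff_1 less_le_trans zero_less_one power_Suc2)
    then show ?thesis by (simp add: power_mult_distrib)
  qed
  also have "\<dots> \<le> 3^n * (2*x)^n"
  proof (rule mult_mono)
    show "(3::real)^(n-1) \<le> 3^n" by (intro power_increasing) auto
    show "x^n \<le> (2*x)^n" using x by (intro power_mono) auto
  qed (use x in auto)
  finally have "(2*x+1)^(n-1) * x \<le> 3^n * (2*x)^n"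
    using mult_right_mono[OF a, of x] x by linarith
  then show ?thesis using x by (simp add: field_simps)
qed

lemma prod_upper_half: "(\<Prod>m\<in>{k..<2*k}. g m) = (\<Prod>m<k. g (k + m :: nat) :: 'a::comm_monoid_mult)"
  using prod.shift_bounds_nat_ivl[of g 0 k k] by (simp add: mult_2 add.commute atLeast0LessThan)

lemma prod_lessThan_double:
  "(\<Prod>m<2*k. g m) = (\<Prod>m<k. g (m::nat)) * (\<Prod>m\<in>{k..<2*k}. g m :: 'a::comm_monoid_mult)"
  by (simp add: prod.atLeastLessThan_concat flip: atLeast0LessThan)

lemma prod_indicator:
  "finite A \<Longrightarrow> (\<Prod>m\<in>A. if P m then 1 else 0) = (if \<forall>m\<in>A. P m then 1 else (0::'a::comm_semiring_1))"
  by (induction A rule: finite_induct) auto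

definition covariance_bound :: "nat \<Rightarrow> (nat \<Rightarrow> real) \<Rightarrow> real" where
  "covariance_bound k moment = (1 + real (2*k) * moment (2*k)) + (1 + real k * moment k) ^ 2"

locale band_entries = prob_space M + walk_pair_count N k b B R
  for M :: "'a measure" and N k b B :: nat and R :: edge_rel +
  fixes X :: "nat \<Rightarrow> nat \<Rightarrow> 'a \<Rightarrow> real" and moment :: "nat \<Rightarrow> real"
  assumes X_measurable: "\<And>i j. X i j \<in> borel_measurable M"
    and X_mean: "\<And>i j. i \<in> {1..N} \<Longrightarrow> j \<in> {1..N} \<Longrightarrow> integrable M (X i j) \<and> expectation (X i j) = 0"
    and X_moment: "\<And>m i j. i \<in> {1..N} \<Longrightarrow> j \<in> {1..N} \<Longrightarrow>
        integrable M (\<lambda>\<omega>. \<bar>X i j \<omega>\<bar> ^ m) \<and> expectation (\<lambda>\<omega>. \<bar>X i j \<omega>\<bar> ^ m) \<le> moment m"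
    and X_indep: "indep_vars (\<lambda>C. PiM C (\<lambda>_. borel)) (\<lambda>C \<omega>. \<lambda>pq\<in>C. X (fst pq) (snd pq) \<omega>)
                    (({1..N} \<times> {1..N}) // R)"
begin

definition entry :: "nat \<times> nat \<Rightarrow> 'a \<Rightarrow> real" where
  "entry pq = X (fst pq) (snd pq)"

definition edge_prod :: "nat set \<Rightarrow> (nat \<Rightarrow> nat) \<Rightarrow> 'a \<Rightarrow> real" where
  "edge_prod I c \<omega> = (\<Prod>m\<in>I. entry (edge k c m) \<omega>)"

lemma moment_nonneg:
  assumes "N \<ge> 1"
  shows "0 \<le> moment m"
proof -
  have "0 \<le> expectation (\<lambda>\<omega>. \<bar>X 1 1 \<omega>\<bar> ^ m)" by (rule integral_nonneg_AE) auto
  also have "\<dots> \<le> moment m" using X_moment assms by auto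
  finally show ?thesis .
qed

lemma edge_prod_integrable_and_bound:
  assumes c: "c \<in> labellings N (2*k)" and I: "I \<subseteq> {..<2*k}"
  shows "integrable M (edge_prod I c)"
    and "\<bar>expectation (edge_prod I c)\<bar> \<le> 1 + real (card I) * moment (card I)"
proof -
  have fin: "finite I" using I finite_subset by blast
  have mm: "integrable M (\<lambda>\<omega>. \<bar>entry (edge k c i) \<omega>\<bar> ^ card I)
      \<and> expectation (\<lambda>\<omega>. \<bar>entry (edge k c i) \<omega>\<bar> ^ card I) \<le> moment (card I)" if "i \<in> I" for i
  proof -
    have "edge k c i \<in> {1..N} \<times> {1..N}" using edge_in[OF c] that I by auto
    then show ?thesis unfolding entry_def using X_moment by auto
  qed
  have ms: "entry (edge k c i) \<in> borel_measurable M" for i unfolding entry_def using X_measurable by simp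
  show "integrable M (edge_prod I c)"
    unfolding edge_prod_def by (rule prod_integrable_and_bound(1)[OF fin ms mm])
  show "\<bar>expectation (edge_prod I c)\<bar> \<le> 1 + real (card I) * moment (card I)"
    unfolding edge_prod_def by (rule prod_integrable_and_bound(2)[OF fin ms mm])
qed

lemma expectation_edge_prod_mult:
  assumes c: "c \<in> labellings N (2*k)" and I: "I \<subseteq> {..<2*k}" and J: "J \<subseteq> {..<2*k}"
    and disj: "\<And>i j. i \<in> I \<Longrightarrow> j \<in> J \<Longrightarrow> (edge k c i, edge k c j) \<notin> R"
  shows "expectation (\<lambda>\<omega>. edge_prod I c \<omega> * edge_prod J c \<omega>)
       = expectation (edge_prod I c) * expectation (edge_prod J c)"
proof -
  have indep: "indep_vars (\<lambda>C. PiM C (\<lambda>_. borel)) (\<lambda>C \<omega>. \<lambda>pq\<in>C. entry pq \<omega>) (({1..N} \<times> {1..N}) // R)"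
    using X_indep unfolding entry_def .
  have fin: "finite I" "finite J" using I J finite_subset by auto
  have edges: "edge k c ` I \<subseteq> {1..N} \<times> {1..N}" "edge k c ` J \<subseteq> {1..N} \<times> {1..N}"
    using edge_in[OF c] I J by (meson image_subsetI lessThan_iff subsetD)+
  show ?thesis
    unfolding edge_prod_def
    by (rule expectation_prod_indep_classes[OF equiv_R indep fin edges disj
          edge_prod_integrable_and_bound(1)[OF c I, unfolded edge_prod_def]
          edge_prod_integrable_and_bound(1)[OF c J, unfolded edge_prod_def]])
qed

lemma expectation_edge_prod_isolated:
  assumes c: "c \<in> labellings N (2*k)" and I: "I \<subseteq> {..<2*k}" and m: "m \<in> I"
    and isolated: "\<And>m'. m' < 2*k \<Longrightarrow> m' \<noteq> m \<Longrightarrow> (edge k c m, edge k c m') \<notin> R"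
  shows "expectation (edge_prod I c) = 0"
proof -
  have "finite I" using I finite_subset by blast
  then have "edge_prod I c = (\<lambda>\<omega>. edge_prod {m} c \<omega> * edge_prod (I - {m}) c \<omega>)"
    unfolding edge_prod_def using prod.remove[OF _ m] by (auto simp: fun_eq_iff)
  then have "expectation (edge_prod I c) = expectation (edge_prod {m} c) * expectation (edge_prod (I - {m}) c)"
    using expectation_edge_prod_mult[OF c, of "{m}" "I - {m}"] I m isolated by auto
  moreover have "expectation (edge_prod {m} c) = 0"
  proof -
    have "edge k c m \<in> {1..N} \<times> {1..N}" using edge_in[OF c] I m by auto
    then show ?thesis unfolding edge_prod_def entry_def using X_mean by auto
  qed
  ultimately show ?thesis by simp
qed

definition join_walks :: "(nat \<Rightarrow> nat) \<Rightarrow> (nat \<Rightarrow> nat) \<Rightarrow> nat \<Rightarrow> nat" where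
  "join_walks u v = restrict (\<lambda>m. if m < k then u m else v (m - k)) {..<2*k}"

definition walk_prod :: "(nat \<Rightarrow> nat) \<Rightarrow> 'a \<Rightarrow> real" where
  "walk_prod u \<omega> = (\<Prod>m<k. X (u m) (u (Suc m mod k)) \<omega>)"

definition walk_weight :: "(nat \<Rightarrow> nat) \<Rightarrow> real" where
  "walk_weight u = (\<Prod>m<k. band_chi b (u m) (u (Suc m mod k))) / (real N * sqrt (2 * real b) ^ k)"

lemma join_walks_in: "u \<in> labellings N k \<Longrightarrow> v \<in> labellings N k \<Longrightarrow> join_walks u v \<in> labellings N (2*k)"
  unfolding join_walks_def by (auto simp: PiE_def Pi_def)

lemma inj_on_join_walks: "inj_on (\<lambda>(u, v). join_walks u v) (labellings N k \<times> labellings N k)"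
proof (rule inj_onI, clarify)
  fix u v u' v' assume u: "u \<in> labellings N k" "v \<in> labellings N k"
    "u' \<in> labellings N k" "v' \<in> labellings N k" and eq: "join_walks u v = join_walks u' v'"
  have "u m = u' m" "v m = v' m" if "m < k" for m
    using fun_cong[OF eq, of m] fun_cong[OF eq, of "k + m"] that unfolding join_walks_def by auto
  then show "u = u' \<and> v = v'"
    using u by (auto intro: PiE_ext)
qed

lemma edge_join_walks_first:
  assumes "m < k"
  shows "edge k (join_walks u v) m = (u m, u (Suc m mod k))"
proof -
  have "Suc m mod k < k" using assms by simp
  then have "Suc m mod k < 2 * k" by linarith
  then show ?thesis using assms unfolding edge_def join_walks_def pair_succ_def by auto
qed

lemma edge_join_walks_second:
  assumes "m < k"
  shows "edge k (join_walks u v) (k + m) = (v m, v (Suc m mod k))"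
proof -
  have "Suc m mod k < k" using assms by simp
  then show ?thesis using assms unfolding edge_def join_walks_def pair_succ_def by auto
qed

lemma walk_prod_first: "walk_prod u = edge_prod {..<k} (join_walks u v)"
  unfolding walk_prod_def edge_prod_def entry_def
  by (auto simp: fun_eq_iff edge_join_walks_first intro!: prod.cong)

lemma walk_prod_second: "walk_prod v = edge_prod {k..<2*k} (join_walks u v)"
  unfolding walk_prod_def edge_prod_def entry_def prod_upper_half
  by (auto simp: fun_eq_iff edge_join_walks_second intro!: prod.cong)

lemma edge_prod_split: "edge_prod {..<2*k} c \<omega> = edge_prod {..<k} c \<omega> * edge_prod {k..<2*k} c \<omega>"
  unfolding edge_prod_def by (rule prod_lessThan_double)

lemma walk_prod_mult: "(\<lambda>\<omega>. walk_prod u \<omega> * walk_prod v \<omega>) = edge_prod {..<2*k} (join_walks u v)"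
  unfolding walk_prod_first[of u v] walk_prod_second[of v u] edge_prod_split ..

lemma walk_weight_mult:
  "walk_weight u * walk_weight v = (if in_band b k (join_walks u v) then 1 else 0) / (real N ^ 2 * (2 * real b) ^ k)"
proof -
  define g where "g m = band_chi b (fst (edge k (join_walks u v) m)) (snd (edge k (join_walks u v) m))" for m
  have first: "(\<Prod>m<k. band_chi b (u m) (u (Suc m mod k))) = (\<Prod>m<k. g m)"
    unfolding g_def by (intro prod.cong) (simp_all add: edge_join_walks_first)
  have second: "(\<Prod>m<k. band_chi b (v m) (v (Suc m mod k))) = (\<Prod>m\<in>{k..<2*k}. g m)"
    unfolding g_def prod_upper_half by (intro prod.cong) (simp_all add: edge_join_walks_second)
  have all: "(\<Prod>m<2*k. g m) = (if in_band b k (join_walks u v) then 1 else 0)"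
    unfolding g_def band_chi_def edge_def in_band_def prod_indicator[OF finite_lessThan] by simp
  have denominator: "(real N * sqrt (2 * real b) ^ k) * (real N * sqrt (2 * real b) ^ k)
      = real N ^ 2 * (2 * real b) ^ k"
  proof -
    have "sqrt (2 * real b) * sqrt (2 * real b) = 2 * real b" by simp
    then have "sqrt (2 * real b) ^ k * sqrt (2 * real b) ^ k = (2 * real b) ^ k"
      by (metis power_mult_distrib)
    then show ?thesis by (simp add: power2_eq_square mult_ac)
  qed
  show ?thesis
    unfolding walk_weight_def times_divide_times_eq first second denominator
      prod_lessThan_double[symmetric] all ..
qed

definition trace_stat :: "'a \<Rightarrow> real" where
  "trace_stat \<omega> = mat_trace N (mat_pow N (\<lambda>i j. band_chi b i j * X i j \<omega> / sqrt (2 * real b)) k) / real N"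

lemma trace_stat_eq_weighted_sum: "trace_stat = (\<lambda>\<omega>. \<Sum>u\<in>labellings N k. walk_weight u * walk_prod u \<omega>)"
  unfolding trace_stat_def mat_trace_mat_pow_eq_sum_cycles[OF k_pos] walk_weight_def walk_prod_def
  by (simp add: fun_eq_iff prod.distrib prod_dividef sum_divide_distrib mult.commute)

definition split_covariance :: "(nat \<Rightarrow> nat) \<Rightarrow> real" where
  "split_covariance c =
     expectation (edge_prod {..<2*k} c) - expectation (edge_prod {..<k} c) * expectation (edge_prod {k..<2*k} c)"

definition walk_covariance :: "(nat \<Rightarrow> nat) \<Rightarrow> (nat \<Rightarrow> nat) \<Rightarrow> real" where
  "walk_covariance u v =
     expectation (\<lambda>\<omega>. walk_prod u \<omega> * walk_prod v \<omega>) - expectation (walk_prod u) * expectation (walk_prod v)"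

lemma covariance_bound_nonneg: "N \<ge> 1 \<Longrightarrow> 0 \<le> covariance_bound k moment"
  unfolding covariance_bound_def using moment_nonneg by simp

lemma split_covariance_le:
  assumes c: "c \<in> labellings N (2*k)"
  shows "split_covariance c \<le> covariance_bound k moment"
proof -
  have "\<bar>expectation (edge_prod {..<2*k} c)\<bar> \<le> 1 + real (2*k) * moment (2*k)"
    using edge_prod_integrable_and_bound(2)[OF c, of "{..<2*k}"] by simp
  moreover have "\<bar>expectation (edge_prod {..<k} c)\<bar> \<le> 1 + real k * moment k"
    using edge_prod_integrable_and_bound(2)[OF c, of "{..<k}"] by simp
  moreover have "\<bar>expectation (edge_prod {k..<2*k} c)\<bar> \<le> 1 + real k * moment k"
    using edge_prod_integrable_and_bound(2)[OF c, of "{k..<2*k}"] by (simp add: subset_eq)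
  ultimately have "\<bar>expectation (edge_prod {..<k} c) * expectation (edge_prod {k..<2*k} c)\<bar>
      \<le> (1 + real k * moment k) ^ 2"
    unfolding abs_mult power2_eq_square by (intro mult_mono) auto
  then show ?thesis
    using \<open>\<bar>expectation (edge_prod {..<2*k} c)\<bar> \<le> _\<close>
    unfolding split_covariance_def covariance_bound_def by linarith
qed

lemma split_covariance_eq_0:
  assumes c: "c \<in> labellings N (2*k)"
    and ng: "\<not> (edges_repeated R k c \<and> (\<exists>i<k. \<exists>j<k. (edge k c i, edge k c (k + j)) \<in> R))"
  shows "split_covariance c = 0"
proof (cases "edges_repeated R k c")
  case True
  then have nl: "\<And>i j. i < k \<Longrightarrow> j < k \<Longrightarrow> (edge k c i, edge k c (k + j)) \<notin> R" using ng by auto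
  have "expectation (edge_prod {..<2*k} c)
      = expectation (\<lambda>\<omega>. edge_prod {..<k} c \<omega> * edge_prod {k..<2*k} c \<omega>)"
    by (simp add: edge_prod_split[abs_def])
  also have "\<dots> = expectation (edge_prod {..<k} c) * expectation (edge_prod {k..<2*k} c)"
  proof (rule expectation_edge_prod_mult[OF c])
    fix i j assume i: "i \<in> {..<k}" and j: "j \<in> {k..<2*k}"
    have "j = k + (j - k)" "j - k < k" using j by auto
    then show "(edge k c i, edge k c j) \<notin> R" using nl[of i "j - k"] i by auto
  qed auto
  finally show ?thesis by (simp add: split_covariance_def)
next
  case False
  then obtain m where m: "m < 2*k" "\<And>m'. m' < 2*k \<Longrightarrow> m' \<noteq> m \<Longrightarrow> (edge k c m, edge k c m') \<notin> R"
    unfolding edges_repeated_def by auto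
  have "expectation (edge_prod {..<2*k} c) = 0"
    by (rule expectation_edge_prod_isolated[OF c _ _ m(2)]) (use m in auto)
  have "expectation (edge_prod {..<k} c) = 0 \<or> expectation (edge_prod {k..<2*k} c) = 0"
  proof (cases "m < k")
    case True then show ?thesis using expectation_edge_prod_isolated[OF c _ _ m(2), of "{..<k}"] by auto
  next
    case False
    moreover have "{k..<2*k} \<subseteq> {..<2*k}" by auto
    ultimately show ?thesis using expectation_edge_prod_isolated[OF c _ _ m(2), of "{k..<2*k}"] m(1) by auto
  qed
  with \<open>expectation (edge_prod {..<2*k} c) = 0\<close> show ?thesis by (auto simp: split_covariance_def)
qed

lemma walk_covariance_eq: "walk_covariance u v = split_covariance (join_walks u v)"
proof -
  have "expectation (\<lambda>\<omega>. walk_prod u \<omega> * walk_prod v \<omega>) = expectation (edge_prod {..<2*k} (join_walks u v))"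
    unfolding walk_prod_mult ..
  then show ?thesis
    unfolding walk_covariance_def split_covariance_def
    by (simp only: walk_prod_first[of u v] walk_prod_second[of v u])
qed

lemma weighted_covariance_le:
  assumes u: "u \<in> labellings N k" and v: "v \<in> labellings N k"
  shows "walk_weight u * walk_weight v * walk_covariance u v
         \<le> (if contributing R b k (join_walks u v)
             then covariance_bound k moment / (real N ^ 2 * (2 * real b) ^ k) else 0)"
proof -
  define c where "c = join_walks u v"
  define D where "D = real N ^ 2 * (2 * real b) ^ k"
  have c: "c \<in> labellings N (2*k)" unfolding c_def using join_walks_in[OF u v] .
  have lhs: "walk_weight u * walk_weight v * walk_covariance u v
             = (if in_band b k c then 1 else 0) / D * split_covariance c"
    unfolding walk_weight_mult walk_covariance_eq c_def D_def ..
  show ?thesis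
  proof (cases "contributing R b k c")
    case True
    then have "(if in_band b k c then 1 else 0) / D * split_covariance c = split_covariance c / D"
      unfolding contributing_def by simp
    also have "\<dots> \<le> covariance_bound k moment / D"
      by (intro divide_right_mono split_covariance_le[OF c]) (simp add: D_def)
    finally show ?thesis using True unfolding lhs c_def D_def by simp
  next
    case False
    then have "\<not> in_band b k c \<or> split_covariance c = 0"
      using split_covariance_eq_0[OF c] unfolding contributing_def by blast
    then show ?thesis using False unfolding lhs c_def by auto
  qed
qed

lemma variance_trace_stat_le_card:
  "variance trace_stat
   \<le> covariance_bound k moment / (real N ^ 2 * (2 * real b) ^ k)
      * card {c \<in> labellings N (2*k). contributing R b k c}"
proof -
  define D where "D = real N ^ 2 * (2 * real b) ^ k"
  define P where "P = {p \<in> labellings N k \<times> labellings N k. contributing R b k (join_walks (fst p) (snd p))}"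
  have integrable: "integrable M (walk_prod u)" if "u \<in> labellings N k" for u
    using walk_prod_first[of u u] edge_prod_integrable_and_bound(1)[OF join_walks_in[OF that that]] by simp
  have integrable_mult: "integrable M (\<lambda>\<omega>. walk_prod u \<omega> * walk_prod v \<omega>)"
    if "u \<in> labellings N k" "v \<in> labellings N k" for u v
    unfolding walk_prod_mult using edge_prod_integrable_and_bound(1)[OF join_walks_in[OF that]] by simp
  have "variance trace_stat
      = (\<Sum>u\<in>labellings N k. \<Sum>v\<in>labellings N k. walk_weight u * walk_weight v * walk_covariance u v)"
    unfolding trace_stat_eq_weighted_sum walk_covariance_def
    by (rule variance_weighted_sum[OF finite_labellings integrable integrable_mult])
  also have "\<dots> \<le> (\<Sum>u\<in>labellings N k. \<Sum>v\<in>labellings N k.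
                     if contributing R b k (join_walks u v) then covariance_bound k moment / D else 0)"
    unfolding D_def by (intro sum_mono weighted_covariance_le)
  also have "\<dots> = (\<Sum>p\<in>labellings N k \<times> labellings N k.
                     if contributing R b k (join_walks (fst p) (snd p)) then covariance_bound k moment / D else 0)"
    by (simp add: sum.cartesian_product case_prod_beta)
  also have "\<dots> = (\<Sum>p\<in>P. covariance_bound k moment / D)"
    unfolding P_def by (rule sum.inter_filter[symmetric]) (intro finite_cartesian_product finite_labellings)
  also have "\<dots> = covariance_bound k moment / D * card P" by simp
  also have "\<dots> \<le> covariance_bound k moment / D * card {c \<in> labellings N (2*k). contributing R b k c}"
  proof (rule mult_left_mono)
    have "card P \<le> card {c \<in> labellings N (2*k). contributing R b k c}"
    proof (rule card_inj_on_le)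
      show "inj_on (\<lambda>(u, v). join_walks u v) P"
        by (rule inj_on_subset[OF inj_on_join_walks]) (auto simp: P_def)
      show "(\<lambda>(u, v). join_walks u v) ` P \<subseteq> {c \<in> labellings N (2*k). contributing R b k c}"
        unfolding P_def using join_walks_in by auto
      show "finite {c \<in> labellings N (2*k). contributing R b k c}"
        using finite_labellings by auto
    qed
    then show "real (card P) \<le> real (card {c \<in> labellings N (2*k). contributing R b k c})" by simp
    show "0 \<le> covariance_bound k moment / D"
      using covariance_bound_nonneg unfolding D_def by (cases "N = 0") auto
  qed
  finally show ?thesis unfolding D_def .
qed

lemma variance_trace_stat_le:
  assumes N: "N \<ge> 1" and b: "b \<ge> 1"
  shows "variance trace_stat
    \<le> covariance_bound k moment * real (k * k * 4^k * (2*k*B+1)^(2*k)) * 3^k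
       * (real (MAX p\<in>{1..N}. card {(q, r, s). q \<in> {1..N} \<and> r \<in> {1..N} \<and> s \<in> {1..N}
                                   \<and> ((p, q), (r, s)) \<in> R}) / (real N * real b))"
proof -
  define m where "m = (MAX p\<in>{1..N}. card {(q, r, s). q \<in> {1..N} \<and> r \<in> {1..N} \<and> s \<in> {1..N}
                                   \<and> ((p, q), (r, s)) \<in> R})"
  define C where "C = k * k * 4^k * (2*k*B+1)^(2*k)"
  have bound: "0 \<le> covariance_bound k moment" by (rule covariance_bound_nonneg[OF N])
  have pos: "real N > 0" "real b \<ge> 1" using N b by auto
  have "real (card {c \<in> labellings N (2*k). contributing R b k c}) \<le> real (C * N * m * (2*b+1)^(k-1))"
    using card_contributing_bound unfolding C_def m_def by linarith
  then have card: "real (card {c \<in> labellings N (2*k). contributing R b k c})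
      \<le> real C * real N * real m * (2 * real b + 1)^(k-1)" by (simp add: add.commute)
  have "variance trace_stat \<le> covariance_bound k moment / (real N ^ 2 * (2 * real b) ^ k)
      * real (card {c \<in> labellings N (2*k). contributing R b k c})"
    by (rule variance_trace_stat_le_card)
  also have "\<dots> \<le> covariance_bound k moment / (real N ^ 2 * (2 * real b) ^ k)
      * (real C * real N * real m * (2 * real b + 1)^(k-1))"
    using card bound by (intro mult_left_mono) auto
  also have "\<dots> = covariance_bound k moment * real C * (real m / (real N * real b))
                   * (real b * ((2 * real b + 1)^(k-1) / (2 * real b)^k))"
    using pos by (simp add: field_simps power2_eq_square)
  also have "\<dots> \<le> covariance_bound k moment * real C * (real m / (real N * real b))
                   * (real b * (3^k / real b))"
    using band_power_ratio_le[OF pos(2) k_pos] pos bound by (intro mult_left_mono) auto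
  also have "\<dots> = covariance_bound k moment * real C * 3^k * (real m / (real N * real b))"
    using pos by simp
  finally show ?thesis unfolding C_def m_def .
qed

end

section \<open>The limit\<close>

lemma variance_Y_stat_le:
  assumes "band_entries M N k B R (X N) moment" and "N \<ge> 1" "b N \<ge> 1"
  shows "prob_space.variance M (Y_stat b X k N)
    \<le> covariance_bound k moment * real (k * k * 4^k * (2*k*B+1)^(2*k)) * 3^k
       * (real (MAX p\<in>{1..N}. card {(q, r, s). q \<in> {1..N} \<and> r \<in> {1..N} \<and> s \<in> {1..N}
                                   \<and> ((p, q), (r, s)) \<in> R}) / (real N * real (b N)))"
proof -
  interpret band_entries M N k "b N" B R "X N" moment by (rule assms(1))
  have "Y_stat b X k N = trace_stat"
    unfolding Y_stat_def band_matrix_def trace_stat_def by (simp add: fun_eq_iff)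
  then show ?thesis using variance_trace_stat_le[OF assms(2,3)] by simp
qed

lemma tendsto_div_mult_zero:
  fixes f :: "nat \<Rightarrow> real" and b :: "nat \<Rightarrow> nat"
  assumes f: "f \<in> o(\<lambda>N. real (b N) ^ 2)" and b: "(\<lambda>N. real (b N)) \<in> o(\<lambda>N. real N)"
    and b_pos: "\<And>N. b N > 0"
  shows "(\<lambda>N. f N / (real N * real (b N))) \<longlonglongrightarrow> 0"
proof -
  have "(\<lambda>N. f N / real (b N) ^ 2 * (real (b N) / real N)) \<longlonglongrightarrow> 0 * 0"
    by (intro tendsto_mult smalloD_tendsto f b)
  moreover have "f N / real (b N) ^ 2 * (real (b N) / real N) = f N / (real N * real (b N))" for N
    using b_pos[of N] by (simp add: field_simps power2_eq_square)
  ultimately show ?thesis by simp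
qed

lemma variance_Y_stat_0:
  assumes "prob_space M"
  shows "prob_space.variance M (Y_stat b X 0 N) = 0"
proof -
  interpret prob_space M by (rule assms)
  have "Y_stat b X 0 N = (\<lambda>\<omega>. real N / real N)"
    unfolding Y_stat_def mat_trace_def by (simp add: fun_eq_iff)
  then show ?thesis by (simp add: prob_space)
qed

theorem mainTheorem16:
  fixes M :: "nat \<Rightarrow> 'a measure"
    and b :: "nat \<Rightarrow> nat"
    and R :: "nat \<Rightarrow> ((nat \<times> nat) \<times> (nat \<times> nat)) set"
    and X :: "nat \<Rightarrow> nat \<Rightarrow> nat \<Rightarrow> 'a \<Rightarrow> real"
    and B :: nat
  assumes prob: "\<And>N. prob_space (M N)"
    and b_pos: "\<And>N. b N > 0"
    and b_inf: "filterlim b at_top at_top"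
    and b_small: "(\<lambda>N. real (b N)) \<in> o(\<lambda>N. real N)"
    and equiv: "\<And>N. equiv ({1..N} \<times> {1..N}) (R N)"
    and R_swap: "\<And>N p q. p \<in> {1..N} \<Longrightarrow> q \<in> {1..N} \<Longrightarrow> ((p, q), (q, p)) \<in> R N"
    and O1: "(\<lambda>N. real (Max ((\<lambda>p. card {(q, r, s). q \<in> {1..N} \<and> r \<in> {1..N} \<and> s \<in> {1..N}
                  \<and> ((p, q), (r, s)) \<in> R N}) ` {1..N})))
             \<in> o(\<lambda>N. real (b N) ^ 2)"
    and O2: "\<And>N p q r. p \<in> {1..N} \<Longrightarrow> q \<in> {1..N} \<Longrightarrow> r \<in> {1..N} \<Longrightarrow>
               card {s \<in> {1..N}. ((p, q), (r, s)) \<in> R N} \<le> B"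
    and O3: "(\<lambda>N. real (card {(p, q, r). p \<in> {1..N} \<and> q \<in> {1..N} \<and> r \<in> {1..N}
                  \<and> ((p, q), (q, r)) \<in> R N \<and> r \<noteq> p}))
             \<in> o(\<lambda>N. real (b N) ^ 2)"
    and X_meas: "\<And>N i j. X N i j \<in> borel_measurable (M N)"
    and X_sym: "\<And>N i j. X N i j = X N j i"
    and X_mean: "\<And>N i j. i \<in> {1..N} \<Longrightarrow> j \<in> {1..N} \<Longrightarrow>
                   integrable (M N) (X N i j) \<and> prob_space.expectation (M N) (X N i j) = 0"
    and X_var: "\<And>N i j. i \<in> {1..N} \<Longrightarrow> j \<in> {1..N} \<Longrightarrow>
                   integrable (M N) (\<lambda>\<omega>. (X N i j \<omega>)\<^sup>2) \<and>
                   prob_space.expectation (M N) (\<lambda>\<omega>. (X N i j \<omega>)\<^sup>2) = 1"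
    and X_moments: "\<And>m. \<exists>C. \<forall>N i j. i \<in> {1..N} \<longrightarrow> j \<in> {1..N} \<longrightarrow>
                   integrable (M N) (\<lambda>\<omega>. \<bar>X N i j \<omega>\<bar> ^ m) \<and>
                   prob_space.expectation (M N) (\<lambda>\<omega>. \<bar>X N i j \<omega>\<bar> ^ m) \<le> C"
    and X_indep: "\<And>N. prob_space.indep_vars (M N) (\<lambda>C. PiM C (\<lambda>_. borel))
                   (\<lambda>C \<omega>. \<lambda>pq\<in>C. X N (fst pq) (snd pq) \<omega>) (({1..N} \<times> {1..N}) // R N)"
  shows "\<forall>k::nat. (\<lambda>N. prob_space.variance (M N) (Y_stat b X k N)) \<longlonglongrightarrow> 0"
proof
  fix k :: nat
  show "(\<lambda>N. prob_space.variance (M N) (Y_stat b X k N)) \<longlonglongrightarrow> 0"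
  proof (cases "k = 0")
    case True
    then show ?thesis using variance_Y_stat_0[OF prob] by simp
  next
    case False
    have "\<exists>moment. \<forall>m N i j. i \<in> {1..N} \<longrightarrow> j \<in> {1..N} \<longrightarrow>
        integrable (M N) (\<lambda>\<omega>. \<bar>X N i j \<omega>\<bar> ^ m) \<and>
        prob_space.expectation (M N) (\<lambda>\<omega>. \<bar>X N i j \<omega>\<bar> ^ m) \<le> moment m"
      by (intro choice allI) (rule X_moments)
    then obtain moment :: "nat \<Rightarrow> real" where moment: "\<And>m N i j. i \<in> {1..N} \<Longrightarrow> j \<in> {1..N} \<Longrightarrow>
        integrable (M N) (\<lambda>\<omega>. \<bar>X N i j \<omega>\<bar> ^ m) \<and>
        prob_space.expectation (M N) (\<lambda>\<omega>. \<bar>X N i j \<omega>\<bar> ^ m) \<le> moment m"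
      by blast
    define m where "m N = real (MAX p\<in>{1..N}. card {(q, r, s). q \<in> {1..N} \<and> r \<in> {1..N} \<and> s \<in> {1..N}
                                   \<and> ((p, q), (r, s)) \<in> R N})" for N
    define K where "K = covariance_bound k moment * real (k * k * 4^k * (2*k*B+1)^(2*k)) * 3^k"
    have bound: "prob_space.variance (M N) (Y_stat b X k N) \<le> K * (m N / (real N * real (b N)))"
      if "N \<ge> 1" for N
      unfolding K_def m_def using False b_pos[of N] that
      by (intro variance_Y_stat_le band_entries.intro walk_pair_count.intro band_entries_axioms.intro
          prob equiv O2 X_meas X_mean moment X_indep) auto
    have limit: "(\<lambda>N. K * (m N / (real N * real (b N)))) \<longlonglongrightarrow> 0"
      using tendsto_mult_right_zero[OF tendsto_div_mult_zero[OF O1[folded m_def] b_small b_pos]] .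
    show ?thesis
    proof (rule real_tendsto_sandwich[OF _ _ tendsto_const limit])
      show "\<forall>\<^sub>F N in sequentially. 0 \<le> prob_space.variance (M N) (Y_stat b X k N)"
        using prob_space.variance_positive[OF prob] by simp
      show "\<forall>\<^sub>F N in sequentially.
              prob_space.variance (M N) (Y_stat b X k N) \<le> K * (m N / (real N * real (b N)))"
        using bound by (rule eventually_sequentiallyI)
    qed
  qed
qed

end
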